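(* Let $p$ be a prime, $k, r \geq 1$ with $p \geq r+1$, and let $G_j = \mathbb{F}_p^{n_j}$ for $j \in [k]$, $G^{\oplus} = G_1 \oplus \cdots \oplus G_k$. Let $\psi \colon (G^{\oplus})^{r-1} \times G_1 \times \cdots \times G_k \to \mathbb{F}_p$ be a multilinear form such that (i) for all $i < j$ in $[r-1]$, $\psi(a^{(1)}, \dots, a^{(r-1)}, d_1, \dots, d_k) = \psi(\tilde a^{(1)}, \dots, \tilde a^{(r-1)}, d_1, \dots, d_k)$ identically, where $(\tilde a^{(\ell)})$ is obtained from $(a^{(\ell)})$ by swapping $a^{(i)}$ and $a^{(j)}$; and (ii) for all $i \in [r-1]$, $j \in [k]$, all $a^{(\ell)} \in G^{\oplus}$ ($\ell \neq i$), $u_j \in G_j$ and $d_1 \in G_1, \dots, d_k \in G_k$, \[\psi(a^{(1)}, \dots, a^{(i-1)}, \iota_j(u_j), a^{(i+1)}, \dots, a^{(r-1)}, d_1, \dots, d_k) = \psi(a^{(1)}, \dots, a^{(i-1)}, \iota_j(d_j), a^{(i+1)}, \dots, a^{(r-1)}, d_1, \dots, d_{j-1}, u_j, d_{j+1}, \dots, d_k),\] where $\iota_j(u) \in G^{\oplus}$ has $j$-th component $u$ and all others $0$. Then there exist a polynomial $P \in \mathcal{P}_{k,r}$ and a polynomial $Q$ in the coordinates of $a^{(1)}, \dots, a^{(r-1)} \in G^{\oplus}$ and $x_1 \in G_1, \dots, x_k \in G_k$ such that for all $a^{(1)}, \dots, a^{(r-1)} \in G^{\oplus}$ and $x = (x_1,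 \dots, x_k) \in G^{\oplus}$, \[\psi(a^{(1)}, \dots, a^{(r-1)}, x_1, \dots, x_k) = \Delta_{a^{(1)}} \cdots \Delta_{a^{(r-1)}} P(x) + Q(a^{(1)}, \dots, a^{(r-1)}, x_1, \dots, x_k),\] and for every monomial $m$ appearing in $Q$ there is $i \in [k]$ such that none of the variables $x_{i,c}$, $c \in [n_i]$, appears in $m$.
   Context: For $x \in G^{\oplus}$ write $x_{j,c}$ ($j \in [k]$, $c \in [n_j]$) for its coordinates, $x_{j,c}$ being the $c$-th coordinate of the $G_j$-component $x_j$. $\mathcal{P}_{k,r}$ is the set of polynomials $G^{\oplus} \to \mathbb{F}_p$ that are $\mathbb{F}_p$-linear combinations of monomials $x_{d_1,c_1} x_{d_2,c_2} \cdots x_{d_{k+r-1},c_{k+r-1}}$ (repetitions allowed) such that every $i \in [k]$ occurs among $d_1, \dots, d_{k+r-1}$. For $F \colon G^{\oplus} \to \mathbb{F}_p$ and $h \in G^{\oplus}$, $\Delta_h F(x) = F(x+h) - F(x)$. *)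

theory Defs
  imports Main "HOL-Library.Multiset" "HOL-Computational_Algebra.Primes"
begin

text \<open>Conventions (0-based indices): a point of G_sum = G_1 + ... + G_k is a function
  x :: nat * nat => 'f, where x (j,c) is the c-th coordinate of the j-th component,
  j < k, c < n j; all other values are 0.  An element of G_j is u :: nat => 'f with
  u c = 0 for c >= n j.\<close>

definition idx :: "nat \<Rightarrow> (nat \<Rightarrow> nat) \<Rightarrow> (nat \<times> nat) set" where
  "idx k n = {(j, c). j < k \<and> c < n j}"

definition Gsum :: "nat \<Rightarrow> (nat \<Rightarrow> nat) \<Rightarrow> (nat \<times> nat \<Rightarrow> 'f::zero) set" where
  "Gsum k n = {x. \<forall>v. v \<notin> idx k n \<longrightarrow> x v = 0}"

definition Gcomp :: "(nat \<Rightarrow> nat) \<Rightarrow> nat \<Rightarrow> (nat \<Rightarrow> 'f::zero) set" where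
  "Gcomp n j = {u. \<forall>c. n j \<le> c \<longrightarrow> u c = 0}"

definition addp :: "('a \<Rightarrow> 'f::plus) \<Rightarrow> ('a \<Rightarrow> 'f) \<Rightarrow> 'a \<Rightarrow> 'f" where
  "addp x y = (\<lambda>v. x v + y v)"

definition smul :: "'f::times \<Rightarrow> ('a \<Rightarrow> 'f) \<Rightarrow> 'a \<Rightarrow> 'f" where
  "smul s x = (\<lambda>v. s * x v)"

definition iota :: "(nat \<Rightarrow> nat) \<Rightarrow> nat \<Rightarrow> (nat \<Rightarrow> 'f::zero) \<Rightarrow> nat \<times> nat \<Rightarrow> 'f" where
  "iota n j u = (\<lambda>(j', c). if j' = j \<and> c < n j then u c else 0)"

definition comp :: "(nat \<times> nat \<Rightarrow> 'f) \<Rightarrow> nat \<Rightarrow> nat \<Rightarrow> 'f" where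
  "comp x j = (\<lambda>c. x (j, c))"

definition setcomp :: "(nat \<Rightarrow> nat) \<Rightarrow> (nat \<times> nat \<Rightarrow> 'f::zero) \<Rightarrow> nat \<Rightarrow> (nat \<Rightarrow> 'f)
    \<Rightarrow> nat \<times> nat \<Rightarrow> 'f" where
  "setcomp n x j u = (\<lambda>(j', c). if j' = j then (if c < n j then u c else 0) else x (j', c))"

text \<open>The first r-1 arguments are a list
  of length r-1 of points of G_sum; the arguments d_1,...,d_k are packed into one point d of
  G_sum (d_j = comp d j).\<close>
definition multilinear_form ::
  "nat \<Rightarrow> (nat \<Rightarrow> nat) \<Rightarrow> nat \<Rightarrow> ((nat \<times> nat \<Rightarrow> 'f::field) list \<Rightarrow> (nat \<times> nat \<Rightarrow> 'f) \<Rightarrow> 'f) \<Rightarrow> bool" where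
  "multilinear_form k n r \<psi> \<longleftrightarrow>
     (\<forall>a d i u v s. set a \<subseteq> Gsum k n \<and> length a = r - 1 \<and> d \<in> Gsum k n \<and> i < r - 1
        \<and> u \<in> Gsum k n \<and> v \<in> Gsum k n \<longrightarrow>
          \<psi> (a[i := addp u v]) d = \<psi> (a[i := u]) d + \<psi> (a[i := v]) d
        \<and> \<psi> (a[i := smul s u]) d = s * \<psi> (a[i := u]) d)
   \<and> (\<forall>a d j u v s. set a \<subseteq> Gsum k n \<and> length a = r - 1 \<and> d \<in> Gsum k n \<and> j < k
        \<and> u \<in> Gcomp n j \<and> v \<in> Gcomp n j \<longrightarrow>
          \<psi> a (setcomp n d j (addp u v)) = \<psi> a (setcomp n d j u) + \<psi> a (setcomp n d j v)
        \<and> \<psi> a (setcomp n d j (smul s u)) = s * \<psi> a (setcomp n d j u))"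

text \<open>Formal polynomials: finitely supported coefficient functions on monomials, a monomial
  being a multiset of variables (repetitions allowed).\<close>
definition is_poly :: "('v multiset \<Rightarrow> 'f::zero) \<Rightarrow> bool" where
  "is_poly cf \<longleftrightarrow> finite {m. cf m \<noteq> 0}"

definition poly_eval :: "('v multiset \<Rightarrow> 'f::comm_ring_1) \<Rightarrow> ('v \<Rightarrow> 'f) \<Rightarrow> 'f" where
  "poly_eval cf x = (\<Sum>m\<in>{m. cf m \<noteq> 0}. cf m * prod_mset (image_mset x m))"

definition in_Pkr :: "nat \<Rightarrow> (nat \<Rightarrow> nat) \<Rightarrow> nat \<Rightarrow> ((nat \<times> nat) multiset \<Rightarrow> 'f::zero) \<Rightarrow> bool" where
  "in_Pkr k n r cf \<longleftrightarrow> is_poly cf \<and>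
     (\<forall>m. cf m \<noteq> 0 \<longrightarrow> size m = k + r - 1 \<and> set_mset m \<subseteq> idx k n
        \<and> (\<forall>i<k. \<exists>c. (i, c) \<in># m))"

definition Delta :: "(nat \<times> nat \<Rightarrow> 'f::ab_group_add) \<Rightarrow> ((nat \<times> nat \<Rightarrow> 'f) \<Rightarrow> 'f) \<Rightarrow> (nat \<times> nat \<Rightarrow> 'f) \<Rightarrow> 'f" where
  "Delta h F = (\<lambda>x. F (addp x h) - F x)"

definition Deltas :: "(nat \<times> nat \<Rightarrow> 'f::ab_group_add) list \<Rightarrow> ((nat \<times> nat \<Rightarrow> 'f) \<Rightarrow> 'f) \<Rightarrow> (nat \<times> nat \<Rightarrow> 'f) \<Rightarrow> 'f" where
  "Deltas hs F = foldr Delta hs F"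

text \<open>Variables of Q: Inl (l, j, c) is the coordinate (j,c) of a^(l) (l < r-1);
  Inr (j, c) is the coordinate c of x_j.\<close>
definition Qvar_ok :: "nat \<Rightarrow> (nat \<Rightarrow> nat) \<Rightarrow> nat \<Rightarrow> (nat \<times> nat \<times> nat) + (nat \<times> nat) \<Rightarrow> bool" where
  "Qvar_ok k n r v = (case v of Inl (l, j, c) \<Rightarrow> l < r - 1 \<and> (j, c) \<in> idx k n
                               | Inr (j, c) \<Rightarrow> (j, c) \<in> idx k n)"

definition Qassign :: "(nat \<times> nat \<Rightarrow> 'f) list \<Rightarrow> (nat \<times> nat \<Rightarrow> 'f) \<Rightarrow> (nat \<times> nat \<times> nat) + (nat \<times> nat) \<Rightarrow> 'f" where
  "Qassign a x v = (case v of Inl (l, j, c) \<Rightarrow> (a ! l) (j, c) | Inr (j, c) \<Rightarrow> x (j, c))"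

end

theory Submission
  imports Defs "HOL-Number_Theory.Residues" "HOL-Library.Function_Algebras"
begin

text \<open>Write \<open>m = r - 1\<close>.  The primitive \<open>P\<close> sends \<open>y\<close> to the sum over count vectors \<open>c\<close> with
  \<open>c\<^sub>0 + \<dots> + c\<^sub>k\<^sub>-\<^sub>1 = m\<close> of \<open>\<psi>\<close> evaluated at \<open>y\<close>, its slots filled with \<open>c\<^sub>j\<close> copies of
  \<open>\<iota>\<^sub>j(y\<^sub>j)\<close> for each \<open>j\<close>, weighted by \<open>\<Prod>\<^sub>j 1 / (c\<^sub>j + 1)!\<close>.  It lies in \<open>P\<^sub>k\<^sub>,\<^sub>r\<close> because
  \<open>\<psi>\<close> is linear in each component of its last argument.  A difference \<open>\<Delta>\<^sub>b P\<close> is the primitive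
  of \<open>\<psi>(\<dots>, b; \<cdot>)\<close> plus a term of degree below \<open>m + k - 1\<close> and terms independent of some
  component; hypotheses (i) and (ii) gather the main terms with factors \<open>c\<^sub>j + 1\<close>, which are
  invertible as \<open>c\<^sub>j + 1 \<le> r < p\<close>.  Inclusion-exclusion over zeroing components annihilates
  both kinds of error terms, so it maps \<open>\<Delta>\<^sub>a P\<close> to \<open>\<psi>(a; \<cdot>)\<close> and kills
  \<open>R = \<psi>(a; \<cdot>) - \<Delta>\<^sub>a P\<close>.  Hence \<open>R\<close> is a sum of functions each ignoring some component
  of \<open>x\<close>, and over a finite field every function is a polynomial, which gives \<open>Q\<close>.\<close>

section \<open>Points of the direct sum\<close>

lemma sum_fun_apply: "(sum f I) x = sum (\<lambda>i. f i x) I"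
  by (induction I rule: infinite_finite_induct) auto

lemma addp_eq_plus: "addp x y = x + y"
  by (simp add: addp_def fun_eq_iff)

lemma smul_zero_right [simp]: "smul a (0 :: 'a \<Rightarrow> 'f::mult_zero) = 0"
  by (simp add: smul_def fun_eq_iff)

lemma finite_idx: "finite (idx k n)"
proof -
  have "idx k n \<subseteq> (\<Union>j<k. {j} \<times> {..<n j})" by (auto simp: idx_def)
  then show ?thesis by (rule finite_subset) auto
qed

lemma Gsum_zero: "(0 :: nat \<times> nat \<Rightarrow> 'f::zero) \<in> Gsum k n"
  by (simp add: Gsum_def)

lemma Gsum_add: "(x :: nat \<times> nat \<Rightarrow> 'f::comm_monoid_add) \<in> Gsum k n \<Longrightarrow> y \<in> Gsum k n \<Longrightarrow> x + y \<in> Gsum k n"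
  by (simp add: Gsum_def)

lemma Gsum_diff: "(x :: nat \<times> nat \<Rightarrow> 'f::ab_group_add) \<in> Gsum k n \<Longrightarrow> y \<in> Gsum k n \<Longrightarrow> x - y \<in> Gsum k n"
  by (simp add: Gsum_def)

lemma Gsum_smul: "(x :: nat \<times> nat \<Rightarrow> 'f::ring) \<in> Gsum k n \<Longrightarrow> smul a x \<in> Gsum k n"
  by (simp add: Gsum_def smul_def)

lemma Gsum_sum:
  "(\<And>i. i \<in> I \<Longrightarrow> (f i :: nat \<times> nat \<Rightarrow> 'f::comm_monoid_add) \<in> Gsum k n) \<Longrightarrow> sum f I \<in> Gsum k n"
  by (induction I rule: infinite_finite_induct) (auto simp: Gsum_zero Gsum_add)

lemma setcomp_in_Gsum: "x \<in> Gsum k n \<Longrightarrow> j < k \<Longrightarrow> setcomp n x j u \<in> Gsum k n"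
  by (auto simp: Gsum_def setcomp_def idx_def)

lemma setcomp_zero_in_Gsum: "x \<in> Gsum k n \<Longrightarrow> setcomp n x j (0 :: nat \<Rightarrow> 'f::zero) \<in> Gsum k n"
  by (auto simp: Gsum_def setcomp_def idx_def)

lemma iota_in_Gsum: "j < k \<Longrightarrow> iota n j u \<in> Gsum k n"
  by (auto simp: Gsum_def iota_def idx_def)

lemma comp_in_Gcomp: "x \<in> Gsum k n \<Longrightarrow> comp x j \<in> Gcomp n j"
  by (auto simp: Gsum_def Gcomp_def comp_def idx_def)

lemma setcomp_comp: "x \<in> Gsum k n \<Longrightarrow> setcomp n x j (comp x j) = x"
  by (auto simp: Gsum_def setcomp_def comp_def idx_def fun_eq_iff)

lemma setcomp_setcomp: "setcomp n (setcomp n x j u) j v = setcomp n x j v"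
  by (auto simp: setcomp_def fun_eq_iff)

lemma setcomp_commute: "i \<noteq> j \<Longrightarrow> setcomp n (setcomp n x i u) j v = setcomp n (setcomp n x j v) i u"
  by (auto simp: setcomp_def fun_eq_iff)

lemma comp_setcomp_same: "u \<in> Gcomp n j \<Longrightarrow> comp (setcomp n x j u) j = u"
  by (auto simp: setcomp_def comp_def Gcomp_def fun_eq_iff)

lemma comp_setcomp_other: "i \<noteq> j \<Longrightarrow> comp (setcomp n x j u) i = comp x i"
  by (auto simp: setcomp_def comp_def fun_eq_iff)

lemma comp_add: "comp (x + y) j = addp (comp x j) (comp y j)"
  by (simp add: comp_def addp_def)

lemma comp_smul: "comp (smul a x) j = smul a (comp x j)"
  by (simp add: comp_def smul_def)

lemma iota_add: "iota n j (addp (u :: nat \<Rightarrow> 'f::monoid_add) v) = iota n j u + iota n j v"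
  by (auto simp: iota_def addp_def fun_eq_iff)

lemma iota_smul: "iota n j (smul a (u :: nat \<Rightarrow> 'f::ring)) = smul a (iota n j u)"
  by (auto simp: iota_def smul_def fun_eq_iff)

lemma Gsum_split_comp:
  "(x :: nat \<times> nat \<Rightarrow> 'f::comm_monoid_add) \<in> Gsum k n \<Longrightarrow> x = setcomp n x j 0 + iota n j (comp x j)"
  by (auto simp: Gsum_def setcomp_def comp_def iota_def idx_def fun_eq_iff)

lemma Gsum_eq_sum_iota_comp:
  assumes x: "(x :: nat \<times> nat \<Rightarrow> 'f::comm_monoid_add) \<in> Gsum k n"
  shows "x = (\<Sum>j<k. iota n j (comp x j))"
proof
  fix v :: "nat \<times> nat"
  obtain j c where v: "v = (j, c)" by fastforce
  show "x v = (\<Sum>j<k. iota n j (comp x j)) v"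
  proof (cases "j < k")
    case True
    have "(\<Sum>j'<k. iota n j' (comp x j')) v = (\<Sum>j'\<in>{j}. iota n j' (comp x j') (j, c))"
      unfolding sum_fun_apply v by (rule sum.mono_neutral_right) (auto simp: True iota_def)
    also have "\<dots> = x v" using x True by (auto simp: iota_def comp_def v Gsum_def idx_def)
    finally show ?thesis by simp
  next
    case False
    then show ?thesis using x by (auto simp: sum_fun_apply iota_def v Gsum_def idx_def)
  qed
qed

context
  fixes k :: nat and n :: "nat \<Rightarrow> nat" and r :: nat
    and \<psi> :: "(nat \<times> nat \<Rightarrow> 'f::field) list \<Rightarrow> (nat \<times> nat \<Rightarrow> 'f) \<Rightarrow> 'f"
  assumes ml: "multilinear_form k n r \<psi>"
begin

lemma multilinear_form_slot_add:
  assumes "set a \<subseteq> Gsum k n" "length a = r - 1" "d \<in> Gsum k n" "i < r - 1"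
    "u \<in> Gsum k n" "v \<in> Gsum k n"
  shows "\<psi> (a[i := u + v]) d = \<psi> (a[i := u]) d + \<psi> (a[i := v]) d"
  using ml assms unfolding multilinear_form_def addp_eq_plus by blast

lemma multilinear_form_slot_smul:
  assumes "set a \<subseteq> Gsum k n" "length a = r - 1" "d \<in> Gsum k n" "i < r - 1" "u \<in> Gsum k n"
  shows "\<psi> (a[i := smul s u]) d = s * \<psi> (a[i := u]) d"
  using ml assms unfolding multilinear_form_def by blast

lemma multilinear_form_slot_zero:
  assumes "set a \<subseteq> Gsum k n" "length a = r - 1" "d \<in> Gsum k n" "i < r - 1"
  shows "\<psi> (a[i := 0]) d = 0"
  using multilinear_form_slot_smul[OF assms Gsum_zero, of 0] by simp

lemma multilinear_form_slot_sum:
  assumes "set a \<subseteq> Gsum k n" "length a = r - 1" "d \<in> Gsum k n" "i < r - 1"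
    and "finite I" "\<And>t. t \<in> I \<Longrightarrow> f t \<in> Gsum k n"
  shows "\<psi> (a[i := \<Sum>t\<in>I. f t]) d = (\<Sum>t\<in>I. \<psi> (a[i := f t]) d)"
  using assms(5,6)
proof (induction I rule: finite_induct)
  case empty
  show ?case unfolding sum.empty by (rule multilinear_form_slot_zero[OF assms(1-4)])
next
  case (insert t I)
  have "\<psi> (a[i := sum f (insert t I)]) d = \<psi> (a[i := f t + sum f I]) d"
    by (simp only: sum.insert[OF insert(1,2)])
  also have "\<dots> = \<psi> (a[i := f t]) d + \<psi> (a[i := sum f I]) d"
    using insert by (intro multilinear_form_slot_add[OF assms(1-4)] Gsum_sum) auto
  also have "\<psi> (a[i := sum f I]) d = (\<Sum>t\<in>I. \<psi> (a[i := f t]) d)"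
    using insert by simp
  finally show ?case by (simp only: sum.insert[OF insert(1,2)])
qed

lemma multilinear_form_comp_add:
  assumes "set a \<subseteq> Gsum k n" "length a = r - 1" "d \<in> Gsum k n" "j < k"
    "u \<in> Gcomp n j" "v \<in> Gcomp n j"
  shows "\<psi> a (setcomp n d j (addp u v)) = \<psi> a (setcomp n d j u) + \<psi> a (setcomp n d j v)"
  using ml assms unfolding multilinear_form_def by blast

lemma multilinear_form_comp_smul:
  assumes "set a \<subseteq> Gsum k n" "length a = r - 1" "d \<in> Gsum k n" "j < k" "u \<in> Gcomp n j"
  shows "\<psi> a (setcomp n d j (smul s u)) = s * \<psi> a (setcomp n d j u)"
  using ml assms unfolding multilinear_form_def by blast

lemma multilinear_form_comp_zero:
  assumes "set a \<subseteq> Gsum k n" "length a = r - 1" "d \<in> Gsum k n" "j < k"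
  shows "\<psi> a (setcomp n d j 0) = 0"
proof -
  have "(0 :: nat \<Rightarrow> 'f) \<in> Gcomp n j" by (simp add: Gcomp_def)
  then show ?thesis using multilinear_form_comp_smul[OF assms, of 0 0] by simp
qed

end

section \<open>Differences and inclusion-exclusion over components\<close>

lemma Delta_apply: "Delta h F y = F (y + h) - F y"
  by (simp add: Delta_def addp_eq_plus)

lemma Deltas_Nil [simp]: "Deltas [] F = F"
  by (simp add: Deltas_def)

lemma Deltas_Cons: "Deltas (h # hs) F = Delta h (Deltas hs F)"
  by (simp add: Deltas_def)

lemma Deltas_append: "Deltas (xs @ ys) F = Deltas xs (Deltas ys F)"
  by (simp add: Deltas_def)

lemma Deltas_snoc: "Deltas (xs @ [h]) F = Deltas xs (Delta h F)"
  by (simp add: Deltas_append Deltas_Cons)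

lemma Deltas_cong:
  fixes F F' :: "(nat \<times> nat \<Rightarrow> 'f::ab_group_add) \<Rightarrow> 'f"
  assumes "set hs \<subseteq> Gsum k n" "y \<in> Gsum k n" "\<And>z. z \<in> Gsum k n \<Longrightarrow> F z = F' z"
  shows "Deltas hs F y = Deltas hs F' y"
  using assms(1,2)
  by (induction hs arbitrary: y) (simp_all add: assms(3) Deltas_Cons Delta_apply Gsum_add)

lemma Deltas_add: "Deltas hs (\<lambda>y. F y + F' y) = (\<lambda>y. Deltas hs F y + Deltas hs F' y)"
  by (induction hs) (auto simp: Deltas_Cons Delta_apply fun_eq_iff algebra_simps)

lemma Deltas_scale: "Deltas hs (\<lambda>y. (a :: 'f::ring) * F y) = (\<lambda>y. a * Deltas hs F y)"
  by (induction hs) (auto simp: Deltas_Cons Delta_apply fun_eq_iff algebra_simps)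

lemma Deltas_zero: "Deltas hs (\<lambda>y. 0 :: 'f::ab_group_add) = (\<lambda>y. 0)"
  by (induction hs) (auto simp: Deltas_Cons Delta_apply fun_eq_iff)

lemma Deltas_sum: "Deltas hs (\<lambda>y. \<Sum>i\<in>I. F i y) = (\<lambda>y. \<Sum>i\<in>I. Deltas hs (F i) y)"
  by (induction hs) (auto simp: Deltas_Cons Delta_apply fun_eq_iff sum_subtractf)

text \<open>\<open>incl_excl j n g x\<close> is the alternating sum of \<open>g\<close> over the points obtained from \<open>x\<close>
  by zeroing any subset of the components \<open>0, \<dots>, j - 1\<close>.\<close>

primrec incl_excl ::
  "nat \<Rightarrow> (nat \<Rightarrow> nat) \<Rightarrow> ((nat \<times> nat \<Rightarrow> 'f::ab_group_add) \<Rightarrow> 'f) \<Rightarrow> (nat \<times> nat \<Rightarrow> 'f) \<Rightarrow> 'f" where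
  "incl_excl 0 n g = g"
| "incl_excl (Suc j) n g = (\<lambda>x. incl_excl j n g x - incl_excl j n g (setcomp n x j 0))"

lemma incl_excl_cong:
  fixes g g' :: "(nat \<times> nat \<Rightarrow> 'f::ab_group_add) \<Rightarrow> 'f"
  assumes "\<And>z. z \<in> Gsum k n \<Longrightarrow> g z = g' z"
  shows "x \<in> Gsum k n \<Longrightarrow> incl_excl j n g x = incl_excl j n g' x"
  by (induction j arbitrary: x) (auto simp: assms setcomp_zero_in_Gsum)

lemma incl_excl_add: "incl_excl j n (\<lambda>y. f y + g y) = (\<lambda>x. incl_excl j n f x + incl_excl j n g x)"
  by (induction j) (auto simp: fun_eq_iff algebra_simps)

lemma incl_excl_diff: "incl_excl j n (\<lambda>y. f y - g y) = (\<lambda>x. incl_excl j n f x - incl_excl j n g x)"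
  by (induction j) (auto simp: fun_eq_iff algebra_simps)

lemma incl_excl_sum: "incl_excl j n (\<lambda>y. \<Sum>i\<in>I. f i y) = (\<lambda>x. \<Sum>i\<in>I. incl_excl j n (f i) x)"
  by (induction j) (auto simp: fun_eq_iff sum_subtractf)

lemma incl_excl_decomp: "g x = incl_excl k n g x + (\<Sum>j<k. incl_excl j n g (setcomp n x j 0))"
proof (induction k)
  case (Suc k)
  let ?x' = "setcomp n x k 0"
  have "g x = incl_excl k n g x + (\<Sum>j<k. incl_excl j n g (setcomp n x j 0))" by (rule Suc.IH)
  also have "\<dots> = (incl_excl k n g x - incl_excl k n g ?x')
      + ((\<Sum>j<k. incl_excl j n g (setcomp n x j 0)) + incl_excl k n g ?x')"
    by (simp add: algebra_simps)
  finally show ?case by (simp only: incl_excl.simps sum.lessThan_Suc)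
qed simp

lemma incl_excl_eq_self:
  fixes g :: "(nat \<times> nat \<Rightarrow> 'f::ab_group_add) \<Rightarrow> 'f"
  assumes "\<And>j z. j < k \<Longrightarrow> z \<in> Gsum k n \<Longrightarrow> g (setcomp n z j 0) = 0"
  shows "j \<le> k \<Longrightarrow> x \<in> Gsum k n \<Longrightarrow> incl_excl j n g x = g x"
proof (induction j arbitrary: x)
  case (Suc j)
  then have "incl_excl j n g (setcomp n x j 0) = g (setcomp n x j 0)"
    by (simp add: setcomp_zero_in_Gsum)
  also have "\<dots> = 0" using assms Suc.prems by simp
  finally show ?case using Suc by simp
qed simp

primrec iota_comps :: "(nat \<Rightarrow> nat) \<Rightarrow> nat \<Rightarrow> (nat \<times> nat \<Rightarrow> 'f::zero) \<Rightarrow> (nat \<times> nat \<Rightarrow> 'f) list" where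
  "iota_comps n 0 x = []"
| "iota_comps n (Suc j) x = iota n j (comp x j) # iota_comps n j x"

primrec zero_comps_below :: "(nat \<Rightarrow> nat) \<Rightarrow> nat \<Rightarrow> (nat \<times> nat \<Rightarrow> 'f::zero) \<Rightarrow> nat \<times> nat \<Rightarrow> 'f" where
  "zero_comps_below n 0 x = x"
| "zero_comps_below n (Suc j) x = setcomp n (zero_comps_below n j x) j 0"

lemma length_iota_comps [simp]: "length (iota_comps n j x) = j"
  by (induction j) auto

lemma iota_comps_in_Gsum: "j \<le> k \<Longrightarrow> set (iota_comps n j x) \<subseteq> Gsum k n"
  by (induction j) (auto simp: iota_in_Gsum)

lemma zero_comps_below_in_Gsum: "x \<in> Gsum k n \<Longrightarrow> zero_comps_below n j x \<in> Gsum k n"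
  by (induction j) (auto simp: setcomp_zero_in_Gsum)

lemma iota_comps_setcomp: "j \<le> i \<Longrightarrow> iota_comps n j (setcomp n x i u) = iota_comps n j x"
  by (induction j) (auto simp: comp_setcomp_other)

lemma zero_comps_below_setcomp:
  "j \<le> i \<Longrightarrow> zero_comps_below n j (setcomp n x i u) = setcomp n (zero_comps_below n j x) i u"
  by (induction j) (auto simp: setcomp_commute)

lemma comp_zero_comps_below: "j \<le> i \<Longrightarrow> comp (zero_comps_below n j x) i = comp x i"
  by (induction j) (auto simp: comp_setcomp_other)

lemma incl_excl_eq_Deltas:
  fixes g :: "(nat \<times> nat \<Rightarrow> 'f::ab_group_add) \<Rightarrow> 'f"
  shows "x \<in> Gsum k n \<Longrightarrow> incl_excl j n g x = Deltas (iota_comps n j x) g (zero_comps_below n j x)"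
proof (induction j arbitrary: x)
  case (Suc j)
  have "zero_comps_below n j x
      = setcomp n (zero_comps_below n j x) j 0 + iota n j (comp (zero_comps_below n j x) j)"
    by (rule Gsum_split_comp[OF zero_comps_below_in_Gsum[OF Suc.prems]])
  then have "zero_comps_below n j x = zero_comps_below n (Suc j) x + iota n j (comp x j)"
    unfolding zero_comps_below.simps(2) comp_zero_comps_below[OF le_refl] .
  then show ?case
    using Suc by (simp add: setcomp_zero_in_Gsum iota_comps_setcomp zero_comps_below_setcomp
        Deltas_Cons Delta_apply)
qed simp

definition comp_indep :: "nat \<Rightarrow> (nat \<Rightarrow> nat) \<Rightarrow> nat \<Rightarrow> ((nat \<times> nat \<Rightarrow> 'f::zero) \<Rightarrow> 'b) \<Rightarrow> bool" where
  "comp_indep k n j g \<longleftrightarrow> (\<forall>z\<in>Gsum k n. g (setcomp n z j 0) = g z)"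

lemma comp_indep_incl_excl:
  fixes g :: "(nat \<times> nat \<Rightarrow> 'f::ab_group_add) \<Rightarrow> 'f"
  shows "comp_indep k n j g \<Longrightarrow> comp_indep k n j (incl_excl i n g)"
proof (induction i)
  case (Suc i)
  then have IH: "comp_indep k n j (incl_excl i n g)" by simp
  show ?case unfolding comp_indep_def
  proof
    fix z :: "nat \<times> nat \<Rightarrow> 'f" assume z: "z \<in> Gsum k n"
    have "incl_excl i n g (setcomp n (setcomp n z j 0) i 0)
        = incl_excl i n g (setcomp n (setcomp n z i 0) j 0)"
      by (cases "i = j") (simp_all add: setcomp_commute)
    also have "\<dots> = incl_excl i n g (setcomp n z i 0)"
      using IH setcomp_zero_in_Gsum[OF z] unfolding comp_indep_def by blast
    finally show "incl_excl (Suc i) n g (setcomp n z j 0) = incl_excl (Suc i) n g z"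
      using IH z by (simp add: comp_indep_def)
  qed
qed simp

lemma incl_excl_comp_indep_eq_0:
  fixes g :: "(nat \<times> nat \<Rightarrow> 'f::ab_group_add) \<Rightarrow> 'f"
  assumes "comp_indep k n j g" "j < i" "x \<in> Gsum k n"
  shows "incl_excl i n g x = 0"
proof -
  have "\<forall>x\<in>Gsum k n. incl_excl (Suc j + t) n g x = 0" for t
  proof (induction t)
    case 0
    show ?case using comp_indep_incl_excl[OF assms(1), of j] by (simp add: comp_indep_def)
  next
    case (Suc t)
    then show ?case by (simp add: setcomp_zero_in_Gsum)
  qed
  from this[of "i - Suc j"] assms(2,3) show ?thesis by simp
qed

lemma comp_indep_Deltas:
  fixes g :: "(nat \<times> nat \<Rightarrow> 'f::ab_group_add) \<Rightarrow> 'f"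
  shows "set hs \<subseteq> Gsum k n \<Longrightarrow> comp_indep k n j g \<Longrightarrow> comp_indep k n j (Deltas hs g)"
proof (induction hs)
  case (Cons h hs)
  then have IH: "comp_indep k n j (Deltas hs g)" and h: "h \<in> Gsum k n" by simp_all
  show ?case unfolding comp_indep_def Deltas_Cons Delta_apply
  proof
    fix z :: "nat \<times> nat \<Rightarrow> 'f" assume z: "z \<in> Gsum k n"
    have zero_j: "setcomp n (setcomp n z j 0 + h) j 0 = setcomp n (z + h) j 0"
      by (auto simp: setcomp_def fun_eq_iff)
    have "Deltas hs g (setcomp n z j 0 + h) = Deltas hs g (setcomp n (setcomp n z j 0 + h) j 0)"
      using IH z h by (simp add: comp_indep_def Gsum_add setcomp_zero_in_Gsum)
    also have "\<dots> = Deltas hs g (setcomp n (z + h) j 0)" unfolding zero_j ..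
    also have "\<dots> = Deltas hs g (z + h)" using IH z h by (simp add: comp_indep_def Gsum_add)
    finally have "Deltas hs g (setcomp n z j 0 + h) = Deltas hs g (z + h)" .
    then show "Deltas hs g (setcomp n z j 0 + h) - Deltas hs g (setcomp n z j 0) =
        Deltas hs g (z + h) - Deltas hs g z"
      using IH z by (simp add: comp_indep_def)
  qed
qed simp

lemma comp_indep_sum:
  "(\<And>i. i \<in> I \<Longrightarrow> comp_indep k n j (f i)) \<Longrightarrow> comp_indep k n j (\<lambda>y. \<Sum>i\<in>I. f i y)"
  by (simp add: comp_indep_def)

lemma comp_indep_scale: "comp_indep k n j f \<Longrightarrow> comp_indep k n j (\<lambda>y. a * f y)"
  by (simp add: comp_indep_def)

definition deg_le :: "nat \<Rightarrow> (nat \<Rightarrow> nat) \<Rightarrow> nat \<Rightarrow> ((nat \<times> nat \<Rightarrow> 'f::ab_group_add) \<Rightarrow> 'f) \<Rightarrow> bool" where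
  "deg_le k n d g \<longleftrightarrow> (\<forall>(hs :: (nat \<times> nat \<Rightarrow> 'f) list) y.
     set hs \<subseteq> Gsum k n \<longrightarrow> y \<in> Gsum k n \<longrightarrow> d < length hs \<longrightarrow> Deltas hs g y = 0)"

lemma deg_le_SucI:
  fixes g :: "(nat \<times> nat \<Rightarrow> 'f::ab_group_add) \<Rightarrow> 'f"
  assumes "\<And>h. h \<in> Gsum k n \<Longrightarrow> deg_le k n d (Delta h g)"
  shows "deg_le k n (Suc d) g"
  unfolding deg_le_def
proof (intro allI impI)
  fix hs :: "(nat \<times> nat \<Rightarrow> 'f) list" and y :: "nat \<times> nat \<Rightarrow> 'f"
  assume hs: "set hs \<subseteq> Gsum k n" and y: "y \<in> Gsum k n" and l: "Suc d < length hs"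
  obtain hs' h where hs_eq: "hs = hs' @ [h]" using l by (cases hs rule: rev_cases) auto
  have "h \<in> Gsum k n" "set hs' \<subseteq> Gsum k n" using hs hs_eq by auto
  then show "Deltas hs g y = 0"
    using assms y l hs_eq unfolding deg_le_def by (simp add: Deltas_snoc)
qed

lemma deg_le_0_const:
  fixes g :: "(nat \<times> nat \<Rightarrow> 'f::ab_group_add) \<Rightarrow> 'f"
  assumes "\<And>y. y \<in> Gsum k n \<Longrightarrow> g y = c"
  shows "deg_le k n 0 g"
  unfolding deg_le_def
proof (intro allI impI)
  fix hs :: "(nat \<times> nat \<Rightarrow> 'f) list" and y :: "nat \<times> nat \<Rightarrow> 'f"
  assume hs: "set hs \<subseteq> Gsum k n" and y: "y \<in> Gsum k n" and l: "0 < length hs"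
  obtain hs' h where hs_eq: "hs = hs' @ [h]" using l by (cases hs rule: rev_cases) auto
  have h: "h \<in> Gsum k n" and hs': "set hs' \<subseteq> Gsum k n" using hs hs_eq by auto
  have "Deltas hs' (Delta h g) y = Deltas hs' (\<lambda>_. 0) y"
    by (rule Deltas_cong[OF hs' y]) (simp add: Delta_apply assms h Gsum_add)
  then show "Deltas hs g y = 0" unfolding hs_eq Deltas_snoc Deltas_zero .
qed

lemma deg_le_cong:
  assumes "deg_le k n d g" "\<And>y. y \<in> Gsum k n \<Longrightarrow> g y = g' y"
  shows "deg_le k n d g'"
  using assms Deltas_cong[of _ k n _ g g'] unfolding deg_le_def by metis

lemma deg_le_scale: "deg_le k n d f \<Longrightarrow> deg_le k n d (\<lambda>y. (a :: 'f::ring) * f y)"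
  unfolding deg_le_def Deltas_scale by simp

lemma deg_le_sum: "(\<And>i. i \<in> I \<Longrightarrow> deg_le k n d (f i)) \<Longrightarrow> deg_le k n d (\<lambda>y. \<Sum>i\<in>I. f i y)"
  unfolding deg_le_def Deltas_sum by simp

lemma incl_excl_Deltas_deg_le_eq_0:
  fixes g :: "(nat \<times> nat \<Rightarrow> 'f::ab_group_add) \<Rightarrow> 'f"
  assumes "deg_le k n d g" "d < k + length hs" "set hs \<subseteq> Gsum k n" "x \<in> Gsum k n"
  shows "incl_excl k n (Deltas hs g) x = 0"
proof -
  have "incl_excl k n (Deltas hs g) x = Deltas (iota_comps n k x @ hs) g (zero_comps_below n k x)"
    by (simp add: incl_excl_eq_Deltas[OF assms(4)] Deltas_append)
  also have "\<dots> = 0"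
    using assms iota_comps_in_Gsum[of k k n x] zero_comps_below_in_Gsum[OF assms(4)]
    unfolding deg_le_def by simp
  finally show ?thesis .
qed

section \<open>Multilinear functions of families of points\<close>

definition multilinear_on ::
  "nat \<Rightarrow> (nat \<Rightarrow> nat) \<Rightarrow> nat set \<Rightarrow> ((nat \<Rightarrow> nat \<times> nat \<Rightarrow> 'f::field) \<Rightarrow> 'f) \<Rightarrow> bool" where
  "multilinear_on k n S T \<longleftrightarrow>
     (\<forall>ys ys'. (\<forall>i\<in>S. ys i = ys' i) \<longrightarrow> T ys = T ys') \<and>
     (\<forall>ys i u v. (\<forall>j\<in>S. ys j \<in> Gsum k n) \<longrightarrow> i \<in> S \<longrightarrow> u \<in> Gsum k n \<longrightarrow> v \<in> Gsum k n \<longrightarrow>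
        T (ys(i := u + v)) = T (ys(i := u)) + T (ys(i := v))) \<and>
     (\<forall>ys i u a. (\<forall>j\<in>S. ys j \<in> Gsum k n) \<longrightarrow> i \<in> S \<longrightarrow> u \<in> Gsum k n \<longrightarrow>
        T (ys(i := smul a u)) = a * T (ys(i := u)))"

context
  fixes k :: nat and n :: "nat \<Rightarrow> nat" and S :: "nat set"
    and T :: "(nat \<Rightarrow> nat \<times> nat \<Rightarrow> 'f::field) \<Rightarrow> 'f"
  assumes ml: "multilinear_on k n S T"
begin

lemma multilinear_on_local: "(\<And>i. i \<in> S \<Longrightarrow> ys i = ys' i) \<Longrightarrow> T ys = T ys'"
  using ml unfolding multilinear_on_def by blast

lemma multilinear_on_add:
  "(\<And>j. j \<in> S \<Longrightarrow> ys j \<in> Gsum k n) \<Longrightarrow> i \<in> S \<Longrightarrow> u \<in> Gsum k n \<Longrightarrow> v \<in> Gsum k n \<Longrightarrow>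
   T (ys(i := u + v)) = T (ys(i := u)) + T (ys(i := v))"
  using ml unfolding multilinear_on_def by blast

lemma multilinear_on_smul:
  "(\<And>j. j \<in> S \<Longrightarrow> ys j \<in> Gsum k n) \<Longrightarrow> i \<in> S \<Longrightarrow> u \<in> Gsum k n \<Longrightarrow>
   T (ys(i := smul a u)) = a * T (ys(i := u))"
  using ml unfolding multilinear_on_def by blast

lemma multilinear_on_zero:
  "(\<And>j. j \<in> S \<Longrightarrow> ys j \<in> Gsum k n) \<Longrightarrow> i \<in> S \<Longrightarrow> T (ys(i := 0)) = 0"
  using multilinear_on_smul[of ys i 0 0] by (simp add: Gsum_zero)

lemma multilinear_on_diff:
  "(\<And>j. j \<in> S \<Longrightarrow> ys j \<in> Gsum k n) \<Longrightarrow> i \<in> S \<Longrightarrow> u \<in> Gsum k n \<Longrightarrow> v \<in> Gsum k n \<Longrightarrow>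
   T (ys(i := u - v)) = T (ys(i := u)) - T (ys(i := v))"
  using multilinear_on_add[of ys i "u - v" v] by (simp add: Gsum_diff)

lemma multilinear_on_sum:
  assumes "\<And>j. j \<in> S \<Longrightarrow> ys j \<in> Gsum k n" "i \<in> S" "finite I" "\<And>t. t \<in> I \<Longrightarrow> f t \<in> Gsum k n"
  shows "T (ys(i := \<Sum>t\<in>I. f t)) = (\<Sum>t\<in>I. T (ys(i := f t)))"
  using assms(3,4)
proof (induction I rule: finite_induct)
  case empty
  show ?case unfolding sum.empty by (rule multilinear_on_zero[OF assms(1,2)])
next
  case (insert t I)
  have "T (ys(i := sum f (insert t I))) = T (ys(i := f t + sum f I))"
    by (simp only: sum.insert[OF insert(1,2)])
  also have "\<dots> = T (ys(i := f t)) + T (ys(i := sum f I))"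
    using insert by (intro multilinear_on_add[OF assms(1,2)] Gsum_sum) auto
  also have "T (ys(i := sum f I)) = (\<Sum>t\<in>I. T (ys(i := f t)))"
    by (rule insert.IH) (simp add: insert.prems)
  finally show ?case by (simp only: sum.insert[OF insert(1,2)])
qed

lemma multilinear_on_fix: "h \<in> Gsum k n \<Longrightarrow> multilinear_on k n (S - {s}) (\<lambda>ys. T (ys(s := h)))"
  unfolding multilinear_on_def
proof (intro conjI allI impI)
  fix ys ys' :: "nat \<Rightarrow> nat \<times> nat \<Rightarrow> 'f"
  assume "\<forall>i\<in>S - {s}. ys i = ys' i"
  then show "T (ys(s := h)) = T (ys'(s := h))" by (intro multilinear_on_local) auto
next
  fix ys :: "nat \<Rightarrow> nat \<times> nat \<Rightarrow> 'f" and i and u v :: "nat \<times> nat \<Rightarrow> 'f"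
  assume a: "\<forall>j\<in>S - {s}. ys j \<in> Gsum k n" "i \<in> S - {s}" "u \<in> Gsum k n" "v \<in> Gsum k n"
    "h \<in> Gsum k n"
  then have "T ((ys(s := h))(i := u + v)) = T ((ys(s := h))(i := u)) + T ((ys(s := h))(i := v))"
    by (intro multilinear_on_add) auto
  then show "T ((ys(i := u + v))(s := h)) = T ((ys(i := u))(s := h)) + T ((ys(i := v))(s := h))"
    using a by (simp add: fun_upd_twist)
next
  fix ys :: "nat \<Rightarrow> nat \<times> nat \<Rightarrow> 'f" and i and u :: "nat \<times> nat \<Rightarrow> 'f" and a
  assume as: "\<forall>j\<in>S - {s}. ys j \<in> Gsum k n" "i \<in> S - {s}" "u \<in> Gsum k n" "h \<in> Gsum k n"
  then have "T ((ys(s := h))(i := smul a u)) = a * T ((ys(s := h))(i := u))"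
    by (intro multilinear_on_smul) auto
  then show "T ((ys(i := smul a u))(s := h)) = a * T ((ys(i := u))(s := h))"
    using as by (simp add: fun_upd_twist)
qed

end

lemma multilinear_on_telescope:
  fixes T :: "(nat \<Rightarrow> nat \<times> nat \<Rightarrow> 'f::field) \<Rightarrow> 'f"
  assumes "finite S" "multilinear_on k n S T"
    and "\<And>i. i \<in> S \<Longrightarrow> us i \<in> Gsum k n" "\<And>i. i \<in> S \<Longrightarrow> vs i \<in> Gsum k n"
  shows "T us - T vs = (\<Sum>s\<in>S. T ((\<lambda>i. if i < s then us i else vs i)(s := us s - vs s)))"
  using assms
proof (induction S arbitrary: T rule: finite_linorder_max_induct)
  case empty
  then show ?case using multilinear_on_local[of k n "{}" T us vs] by simp
next
  case (insert b A)
  let ?mixed = "\<lambda>s. (\<lambda>i. if i < s then us i else vs i)(s := us s - vs s)"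
  have bA: "b \<notin> A" and A_less: "\<And>s. s \<in> A \<Longrightarrow> s < b" using insert.hyps(2) by auto
  let ?T' = "\<lambda>ys. T (ys(b := vs b))"
  have "multilinear_on k n (insert b A - {b}) ?T'"
    by (rule multilinear_on_fix[OF insert.prems(1,3)]) simp
  then have "multilinear_on k n A ?T'" using bA by simp
  then have IH: "?T' us - ?T' vs = (\<Sum>s\<in>A. ?T' (?mixed s))"
    by (rule insert.IH) (simp_all add: insert.prems)
  have "?T' (?mixed s) = T (?mixed s)" if "s \<in> A" for s
  proof -
    have "(?mixed s)(b := vs b) = ?mixed s" using A_less[OF that] by (auto simp: fun_eq_iff)
    then show ?thesis by simp
  qed
  then have IH': "?T' us - T vs = (\<Sum>s\<in>A. T (?mixed s))" using IH by simp
  have "T (us(b := us b - vs b)) = T (us(b := us b)) - T (us(b := vs b))"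
    by (rule multilinear_on_diff[OF insert.prems(1)]) (simp_all add: insert.prems)
  then have "T us - ?T' us = T (us(b := us b - vs b))" unfolding fun_upd_triv ..
  also have "\<dots> = T (?mixed b)"
    using A_less by (intro multilinear_on_local[OF insert.prems(1)]) auto
  finally have mixed_b: "T us - ?T' us = T (?mixed b)" .
  have "T us - T vs = (T us - ?T' us) + (?T' us - T vs)" by simp
  also have "\<dots> = T (?mixed b) + (\<Sum>s\<in>A. T (?mixed s))" unfolding mixed_b IH' ..
  finally show ?case by (simp only: sum.insert[OF insert.hyps(1) bA])
qed

lemma multilinear_on_shift_diff:
  fixes T :: "(nat \<Rightarrow> nat \<times> nat \<Rightarrow> 'f::field) \<Rightarrow> 'f"
  assumes "finite S" "multilinear_on k n S T" "y \<in> Gsum k n"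
    and "\<And>i. u i \<in> Gsum k n" "\<And>i. v i \<in> Gsum k n"
  shows "T (\<lambda>i. y + u i) - T (\<lambda>i. y + v i)
    = (\<Sum>s\<in>S. T ((\<lambda>i. y + (if i < s then u i else v i))(s := u s - v s)))"
proof -
  have "(\<lambda>i. if i < s then y + u i else y + v i)(s := (y + u s) - (y + v s))
      = (\<lambda>i. y + (if i < s then u i else v i))(s := u s - v s)" for s
    by (auto simp: fun_eq_iff)
  then show ?thesis
    using multilinear_on_telescope[OF assms(1,2), of "\<lambda>i. y + u i" "\<lambda>i. y + v i"]
    by (simp add: assms Gsum_add)
qed

lemma Delta_multilinear_on_diag:
  fixes T :: "(nat \<Rightarrow> nat \<times> nat \<Rightarrow> 'f::field) \<Rightarrow> 'f"
  assumes "finite S" "multilinear_on k n S T" "\<And>i. cs i \<in> Gsum k n" "h \<in> Gsum k n" "y \<in> Gsum k n"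
  shows "Delta h (\<lambda>y. T (\<lambda>i. y + cs i)) y
    = (\<Sum>s\<in>S. T ((\<lambda>i. y + (if i < s then h + cs i else cs i))(s := h)))"
proof -
  have "Delta h (\<lambda>y. T (\<lambda>i. y + cs i)) y = T (\<lambda>i. y + (h + cs i)) - T (\<lambda>i. y + cs i)"
    unfolding Delta_apply add.assoc ..
  also have "\<dots> = (\<Sum>s\<in>S. T ((\<lambda>i. y + (if i < s then h + cs i else cs i))(s := (h + cs s) - cs s)))"
    by (rule multilinear_on_shift_diff[OF assms(1,2,5)]) (simp_all add: Gsum_add assms(3,4))
  finally show ?thesis unfolding add_diff_cancel .
qed

lemma multilinear_on_diag_deg_le:
  fixes T :: "(nat \<Rightarrow> nat \<times> nat \<Rightarrow> 'f::field) \<Rightarrow> 'f"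
  assumes "finite S" "multilinear_on k n S T" "\<And>i. cs i \<in> Gsum k n"
  shows "deg_le k n (card S) (\<lambda>y. T (\<lambda>i. y + cs i))"
  using assms
proof (induction "card S" arbitrary: S T cs)
  case 0
  then have "S = {}" by simp
  then have "deg_le k n 0 (\<lambda>y. T (\<lambda>i. y + cs i))"
    using multilinear_on_local[OF "0.prems"(2), of _ "\<lambda>_. 0"]
    by (intro deg_le_0_const) simp
  then show ?case unfolding "0.hyps"[symmetric] .
next
  case (Suc d)
  show ?case unfolding Suc.hyps(2)[symmetric]
  proof (rule deg_le_SucI)
    fix h :: "nat \<times> nat \<Rightarrow> 'f" assume h: "h \<in> Gsum k n"
    define Ts where "Ts s ys = T (ys(s := h))" for s ys
    define css where "css s i = (if i < s then h + cs i else cs i)" for s i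
    have deg_Ts: "deg_le k n d (\<lambda>y. Ts s (\<lambda>i. y + css s i))" if s: "s \<in> S" for s
    proof -
      have card: "d = card (S - {s})" using s Suc.hyps(2) Suc.prems(1) by simp
      have "multilinear_on k n (S - {s}) (Ts s)"
        unfolding Ts_def by (rule multilinear_on_fix[OF Suc.prems(2) h])
      moreover have "css s i \<in> Gsum k n" for i
        using Suc.prems(3) h by (simp add: css_def Gsum_add)
      ultimately have "deg_le k n (card (S - {s})) (\<lambda>y. Ts s (\<lambda>i. y + css s i))"
        using Suc.prems(1) by (intro Suc.hyps(1)[OF card]) simp_all
      then show ?thesis unfolding card[symmetric] .
    qed
    have Delta_eq: "(\<Sum>s\<in>S. Ts s (\<lambda>i. y + css s i)) = Delta h (\<lambda>y. T (\<lambda>i. y + cs i)) y"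
      if "y \<in> Gsum k n" for y
      unfolding Ts_def css_def by (rule Delta_multilinear_on_diag[OF Suc.prems h that, symmetric])
    have "deg_le k n d (\<lambda>y. \<Sum>s\<in>S. Ts s (\<lambda>i. y + css s i))"
      by (rule deg_le_sum) (rule deg_Ts)
    then show "deg_le k n d (Delta h (\<lambda>y. T (\<lambda>i. y + cs i)))"
      by (rule deg_le_cong) (rule Delta_eq)
  qed
qed

lemma multilinear_on_diag_diff_deg_le:
  fixes T :: "(nat \<Rightarrow> nat \<times> nat \<Rightarrow> 'f::field) \<Rightarrow> 'f"
  assumes "finite S" "multilinear_on k n S T" "\<And>i. cs i \<in> Gsum k n"
  shows "deg_le k n (card S - 1) (\<lambda>y. T (\<lambda>i. y + cs i) - T (\<lambda>i. y))"
proof -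
  define Ts where "Ts s ys = T (ys(s := cs s))" for s ys
  define css where "css s i = (if i < s then cs i else 0)" for s i
  have deg_Ts: "deg_le k n (card S - 1) (\<lambda>y. Ts s (\<lambda>i. y + css s i))" if s: "s \<in> S" for s
  proof -
    have "multilinear_on k n (S - {s}) (Ts s)"
      unfolding Ts_def by (rule multilinear_on_fix[OF assms(2,3)])
    then show ?thesis
      using multilinear_on_diag_deg_le[of "S - {s}" k n "Ts s" "css s"] assms s
      by (simp add: css_def Gsum_zero)
  qed
  have diff_eq: "(\<Sum>s\<in>S. Ts s (\<lambda>i. y + css s i)) = T (\<lambda>i. y + cs i) - T (\<lambda>i. y)"
    if y: "y \<in> Gsum k n" for y
  proof -
    have "T (\<lambda>i. y + cs i) - T (\<lambda>i. y + 0) = (\<Sum>s\<in>S. T ((\<lambda>i. y + css s i)(s := cs s - 0)))"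
      unfolding css_def
      by (rule multilinear_on_shift_diff[OF assms(1,2) y]) (simp_all add: assms(3) Gsum_zero)
    then show ?thesis unfolding Ts_def add_0_right diff_0_right by (rule sym)
  qed
  have "deg_le k n (card S - 1) (\<lambda>y. \<Sum>s\<in>S. Ts s (\<lambda>i. y + css s i))"
    by (rule deg_le_sum) (rule deg_Ts)
  then show ?thesis by (rule deg_le_cong) (rule diff_eq)
qed

definition unit_point :: "nat \<times> nat \<Rightarrow> nat \<times> nat \<Rightarrow> 'f::zero_neq_one" where
  "unit_point v = (\<lambda>w. if w = v then 1 else 0)"

text \<open>Outside \<open>S\<close> the choice is fixed to \<open>(0, 0)\<close>, which makes the set finite.\<close>

definition coord_choices :: "nat \<Rightarrow> (nat \<Rightarrow> nat) \<Rightarrow> nat set \<Rightarrow> (nat \<Rightarrow> nat \<times> nat) set" where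
  "coord_choices k n S = {vs. \<forall>i. (i \<in> S \<longrightarrow> vs i \<in> idx k n) \<and> (i \<notin> S \<longrightarrow> vs i = (0, 0))}"

lemma finite_coord_choices: "finite S \<Longrightarrow> finite (coord_choices k n S)"
  unfolding coord_choices_def by (rule finite_set_of_finite_funs[OF _ finite_idx])

lemma unit_point_in_Gsum: "v \<in> idx k n \<Longrightarrow> unit_point v \<in> Gsum k n"
  by (auto simp: unit_point_def Gsum_def)

lemma Gsum_eq_sum_unit_point:
  assumes "(x :: nat \<times> nat \<Rightarrow> 'f::field) \<in> Gsum k n"
  shows "x = (\<Sum>v\<in>idx k n. smul (x v) (unit_point v))"
proof
  fix w
  have "(\<Sum>v\<in>idx k n. smul (x v) (unit_point v)) w = (\<Sum>v\<in>idx k n. if v = w then x v else 0)"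
    unfolding sum_fun_apply by (rule sum.cong) (auto simp: smul_def unit_point_def)
  also have "\<dots> = (if w \<in> idx k n then x w else 0)" by (simp add: finite_idx)
  also have "\<dots> = x w" using assms by (cases w) (auto simp: Gsum_def)
  finally show "x w = (\<Sum>v\<in>idx k n. smul (x v) (unit_point v)) w" by simp
qed

lemma multilinear_on_expand_slot:
  fixes T :: "(nat \<Rightarrow> nat \<times> nat \<Rightarrow> 'f::field) \<Rightarrow> 'f"
  assumes ml: "multilinear_on k n S T" and s: "s \<in> S" and ys: "\<And>i. i \<in> S \<Longrightarrow> ys i \<in> Gsum k n"
  shows "T ys = (\<Sum>v\<in>idx k n. ys s v * T (ys(s := unit_point v)))"
proof -
  have "T ys = T (ys(s := \<Sum>v\<in>idx k n. smul (ys s v) (unit_point v)))"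
    unfolding fun_upd_idem[of ys s, OF Gsum_eq_sum_unit_point[OF ys[OF s]]] ..
  also have "\<dots> = (\<Sum>v\<in>idx k n. T (ys(s := smul (ys s v) (unit_point v))))"
    by (rule multilinear_on_sum[OF ml]) (simp_all add: s ys finite_idx Gsum_smul unit_point_in_Gsum)
  also have "\<dots> = (\<Sum>v\<in>idx k n. ys s v * T (ys(s := unit_point v)))"
    by (rule sum.cong[OF refl], rule multilinear_on_smul[OF ml]) (simp_all add: s ys unit_point_in_Gsum)
  finally show ?thesis .
qed

lemma sum_coord_choices_insert:
  assumes "s \<notin> A"
  shows "(\<Sum>vs\<in>coord_choices k n (insert s A). F vs)
    = (\<Sum>v\<in>idx k n. \<Sum>vs\<in>coord_choices k n A. F (vs(s := v)))"
proof -
  let ?ext = "\<lambda>(v, vs). vs(s := v)"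
  have inj: "inj_on ?ext (idx k n \<times> coord_choices k n A)"
  proof (rule inj_onI, clarify)
    fix v vs v' vs'
    assume a: "vs \<in> coord_choices k n A" "vs' \<in> coord_choices k n A" "vs(s := v) = vs'(s := v')"
    then have "v = v'" by (metis fun_upd_same)
    moreover have "vs i = vs' i" for i
    proof (cases "i = s")
      case True then show ?thesis using a assms by (auto simp: coord_choices_def)
    next
      case False then show ?thesis using a(3) by (metis fun_upd_other)
    qed
    ultimately show "v = v' \<and> vs = vs'" by auto
  qed
  have img: "?ext ` (idx k n \<times> coord_choices k n A) = coord_choices k n (insert s A)"
  proof
    show "?ext ` (idx k n \<times> coord_choices k n A) \<subseteq> coord_choices k n (insert s A)"
      using assms by (auto simp: coord_choices_def)
    show "coord_choices k n (insert s A) \<subseteq> ?ext ` (idx k n \<times> coord_choices k n A)"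
    proof
      fix vs assume vs: "vs \<in> coord_choices k n (insert s A)"
      have "vs = ?ext (vs s, vs(s := (0, 0)))" by simp
      moreover have "(vs s, vs(s := (0, 0))) \<in> idx k n \<times> coord_choices k n A"
        using vs assms by (auto simp: coord_choices_def)
      ultimately show "vs \<in> ?ext ` (idx k n \<times> coord_choices k n A)" by (rule image_eqI)
    qed
  qed
  show ?thesis
    unfolding img[symmetric] sum.reindex[OF inj] sum.cartesian_product by (simp add: case_prod_beta)
qed

lemma multilinear_on_expand:
  fixes T :: "(nat \<Rightarrow> nat \<times> nat \<Rightarrow> 'f::field) \<Rightarrow> 'f"
  assumes "finite S" "multilinear_on k n S T" "\<And>i. i \<in> S \<Longrightarrow> ys i \<in> Gsum k n"
  shows "T ys = (\<Sum>vs\<in>coord_choices k n S. (\<Prod>i\<in>S. ys i (vs i)) * T (\<lambda>i. unit_point (vs i)))"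
  using assms
proof (induction S arbitrary: T rule: finite_induct)
  case empty
  have "coord_choices k n {} = {\<lambda>i. (0, 0)}" by (auto simp: coord_choices_def fun_eq_iff)
  moreover have "T ys = T (\<lambda>i. unit_point (0, 0))" by (rule multilinear_on_local[OF empty.prems(1)]) simp
  ultimately show ?case by simp
next
  case (insert s A)
  note ml = insert.prems(1)
  define Tv where "Tv v zs = T (zs(s := unit_point v))" for v zs
  have IH: "Tv v ys
      = (\<Sum>vs\<in>coord_choices k n A. (\<Prod>i\<in>A. ys i (vs i)) * Tv v (\<lambda>i. unit_point (vs i)))"
    if "v \<in> idx k n" for v
  proof (rule insert.IH)
    have "multilinear_on k n (insert s A - {s}) (Tv v)"
      unfolding Tv_def by (rule multilinear_on_fix[OF ml unit_point_in_Gsum[OF that]])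
    then show "multilinear_on k n A (Tv v)" using insert.hyps(2) by simp
  qed (simp add: insert.prems)
  have extend: "ys s v * ((\<Prod>i\<in>A. ys i (vs i)) * Tv v (\<lambda>i. unit_point (vs i)))
      = (\<Prod>i\<in>insert s A. ys i ((vs(s := v)) i)) * T (\<lambda>i. unit_point ((vs(s := v)) i))" for v vs
  proof -
    have "(\<Prod>i\<in>A. ys i ((vs(s := v)) i)) = (\<Prod>i\<in>A. ys i (vs i))"
      using insert.hyps by (intro prod.cong) auto
    then have prod_eq: "(\<Prod>i\<in>insert s A. ys i ((vs(s := v)) i)) = ys s v * (\<Prod>i\<in>A. ys i (vs i))"
      using insert.hyps by simp
    have upd_eq: "(\<lambda>i. unit_point ((vs(s := v)) i)) = (\<lambda>i. unit_point (vs i))(s := unit_point v)"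
      by (auto simp: fun_eq_iff)
    show ?thesis unfolding prod_eq upd_eq Tv_def by (simp add: mult.assoc)
  qed
  have "T ys = (\<Sum>v\<in>idx k n. ys s v * Tv v ys)"
    unfolding Tv_def by (rule multilinear_on_expand_slot[OF ml]) (simp_all add: insert.prems)
  also have "\<dots> = (\<Sum>v\<in>idx k n. \<Sum>vs\<in>coord_choices k n A.
      (\<Prod>i\<in>insert s A. ys i ((vs(s := v)) i)) * T (\<lambda>i. unit_point ((vs(s := v)) i)))"
    by (simp add: IH sum_distrib_left extend)
  also have "\<dots> = (\<Sum>vs\<in>coord_choices k n (insert s A). (\<Prod>i\<in>insert s A. ys i (vs i)) * T (\<lambda>i. unit_point (vs i)))"
    by (rule sum_coord_choices_insert[OF insert.hyps(2), symmetric])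
  finally show ?case .
qed

section \<open>Polynomial functions\<close>

definition poly_fun_on :: "('v \<Rightarrow> 'f::comm_ring_1) set \<Rightarrow> 'v multiset set \<Rightarrow> (('v \<Rightarrow> 'f) \<Rightarrow> 'f) \<Rightarrow> bool" where
  "poly_fun_on D Ms f \<longleftrightarrow>
     (\<exists>cf. is_poly cf \<and> (\<forall>M. cf M \<noteq> 0 \<longrightarrow> M \<in> Ms) \<and> (\<forall>y\<in>D. f y = poly_eval cf y))"

lemma poly_fun_on_cong: "poly_fun_on D Ms f \<Longrightarrow> (\<And>y. y \<in> D \<Longrightarrow> f y = g y) \<Longrightarrow> poly_fun_on D Ms g"
  unfolding poly_fun_on_def by metis

lemma poly_fun_on_mono: "poly_fun_on D Ms f \<Longrightarrow> Ms \<subseteq> Ms' \<Longrightarrow> poly_fun_on D Ms' f"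
  unfolding poly_fun_on_def by blast

lemma poly_fun_on_monomials:
  fixes coef :: "'i \<Rightarrow> 'f::comm_ring_1" and mon :: "'i \<Rightarrow> 'v multiset"
  assumes "finite I" "\<And>i. i \<in> I \<Longrightarrow> coef i \<noteq> 0 \<Longrightarrow> mon i \<in> Ms"
  shows "poly_fun_on D Ms (\<lambda>y. \<Sum>i\<in>I. coef i * prod_mset (image_mset y (mon i)))"
proof -
  define cf where "cf M = (\<Sum>i\<in>{i\<in>I. mon i = M}. coef i)" for M
  have supp: "{M. cf M \<noteq> 0} \<subseteq> mon ` I"
  proof
    fix M assume "M \<in> {M. cf M \<noteq> 0}"
    then obtain i where "i \<in> {i\<in>I. mon i = M}"
      unfolding cf_def by (auto elim: sum.not_neutral_contains_not_neutral)
    then show "M \<in> mon ` I" by auto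
  qed
  have fin: "finite (mon ` I)" using assms(1) by simp
  have "is_poly cf" unfolding is_poly_def by (rule finite_subset[OF supp fin])
  moreover have "M \<in> Ms" if nz: "cf M \<noteq> 0" for M
  proof -
    obtain i where "i \<in> {i\<in>I. mon i = M}" "coef i \<noteq> 0"
      using nz unfolding cf_def by (rule sum.not_neutral_contains_not_neutral)
    then show "M \<in> Ms" using assms(2) by auto
  qed
  moreover have "(\<Sum>i\<in>I. coef i * prod_mset (image_mset y (mon i))) = poly_eval cf y" for y
  proof -
    have "poly_eval cf y = (\<Sum>M\<in>mon ` I. cf M * prod_mset (image_mset y M))"
      unfolding poly_eval_def by (rule sum.mono_neutral_left) (use fin supp in auto)
    also have "\<dots> = (\<Sum>M\<in>mon ` I. \<Sum>i\<in>{i\<in>I. mon i = M}. coef i * prod_mset (image_mset y (mon i)))"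
      unfolding cf_def sum_distrib_right by (rule sum.cong) auto
    also have "\<dots> = (\<Sum>i\<in>I. coef i * prod_mset (image_mset y (mon i)))"
      by (rule sum.image_gen[symmetric]) (rule assms(1))
    finally show ?thesis by simp
  qed
  ultimately show ?thesis unfolding poly_fun_on_def by blast
qed

lemma poly_fun_on_zero: "poly_fun_on D Ms (\<lambda>y. 0)"
  unfolding poly_fun_on_def by (rule exI[of _ "\<lambda>_. 0"]) (simp add: is_poly_def poly_eval_def)

lemma poly_fun_on_const: "{#} \<in> Ms \<Longrightarrow> poly_fun_on D Ms (\<lambda>y. c)"
  using poly_fun_on_monomials[where I = "{()}" and mon = "\<lambda>_. {#}" and coef = "\<lambda>_. c"] by simp

lemma poly_fun_on_var: "{#v#} \<in> Ms \<Longrightarrow> poly_fun_on D Ms (\<lambda>y. y v)"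
  using poly_fun_on_monomials[where I = "{()}" and mon = "\<lambda>_. {#v#}" and coef = "\<lambda>_. 1"] by simp

lemma poly_fun_on_scale:
  assumes "poly_fun_on D Ms f"
  shows "poly_fun_on D Ms (\<lambda>y. a * f y)"
proof -
  obtain cf where cf: "is_poly cf" "\<forall>M. cf M \<noteq> 0 \<longrightarrow> M \<in> Ms" "\<forall>y\<in>D. f y = poly_eval cf y"
    using assms unfolding poly_fun_on_def by blast
  have "poly_fun_on D Ms (\<lambda>y. \<Sum>M | cf M \<noteq> 0. (a * cf M) * prod_mset (image_mset y M))"
    by (rule poly_fun_on_monomials) (use cf in \<open>auto simp: is_poly_def\<close>)
  then show ?thesis
    by (rule poly_fun_on_cong) (simp add: cf(3) poly_eval_def sum_distrib_left mult.assoc)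
qed

lemma poly_fun_on_add:
  assumes "poly_fun_on D Ms f" "poly_fun_on D Ms g"
  shows "poly_fun_on D Ms (\<lambda>y. f y + g y)"
proof -
  obtain cf where cf: "is_poly cf" "\<forall>M. cf M \<noteq> 0 \<longrightarrow> M \<in> Ms" "\<forall>y\<in>D. f y = poly_eval cf y"
    using assms(1) unfolding poly_fun_on_def by blast
  obtain cg where cg: "is_poly cg" "\<forall>M. cg M \<noteq> 0 \<longrightarrow> M \<in> Ms" "\<forall>y\<in>D. g y = poly_eval cg y"
    using assms(2) unfolding poly_fun_on_def by blast
  have "poly_fun_on D Ms (\<lambda>y. \<Sum>i\<in>{M. cf M \<noteq> 0} <+> {M. cg M \<noteq> 0}.
      case_sum cf cg i * prod_mset (image_mset y (case_sum id id i)))"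
    by (rule poly_fun_on_monomials) (use cf cg in \<open>auto simp: is_poly_def\<close>)
  then show ?thesis
    by (rule poly_fun_on_cong) (use cf(1) cg(1) in \<open>simp add: sum.Plus cf(3) cg(3) poly_eval_def is_poly_def\<close>)
qed

lemma poly_fun_on_mult:
  assumes "poly_fun_on D Ms f" "poly_fun_on D Ms g" "\<And>M M'. M \<in> Ms \<Longrightarrow> M' \<in> Ms \<Longrightarrow> M + M' \<in> Ms"
  shows "poly_fun_on D Ms (\<lambda>y. f y * g y)"
proof -
  obtain cf where cf: "is_poly cf" "\<forall>M. cf M \<noteq> 0 \<longrightarrow> M \<in> Ms" "\<forall>y\<in>D. f y = poly_eval cf y"
    using assms(1) unfolding poly_fun_on_def by blast
  obtain cg where cg: "is_poly cg" "\<forall>M. cg M \<noteq> 0 \<longrightarrow> M \<in> Ms" "\<forall>y\<in>D. g y = poly_eval cg y"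
    using assms(2) unfolding poly_fun_on_def by blast
  have "poly_fun_on D Ms (\<lambda>y. \<Sum>p\<in>{M. cf M \<noteq> 0} \<times> {M. cg M \<noteq> 0}.
      (cf (fst p) * cg (snd p)) * prod_mset (image_mset y (fst p + snd p)))"
    by (rule poly_fun_on_monomials) (use cf cg assms(3) in \<open>auto simp: is_poly_def\<close>)
  then show ?thesis
    by (rule poly_fun_on_cong)
      (simp add: cf(3) cg(3) poly_eval_def sum_product sum.cartesian_product case_prod_beta mult_ac)
qed

lemma poly_fun_on_sum:
  assumes "finite J" "\<And>j. j \<in> J \<Longrightarrow> poly_fun_on D Ms (f j)"
  shows "poly_fun_on D Ms (\<lambda>y. \<Sum>j\<in>J. f j y)"
  using assms by (induction J rule: finite_induct) (simp_all add: poly_fun_on_zero poly_fun_on_add)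

lemma poly_fun_on_prod:
  assumes "finite J" "\<And>j. j \<in> J \<Longrightarrow> poly_fun_on D Ms (f j)" "{#} \<in> Ms"
    and "\<And>M M'. M \<in> Ms \<Longrightarrow> M' \<in> Ms \<Longrightarrow> M + M' \<in> Ms"
  shows "poly_fun_on D Ms (\<lambda>y. \<Prod>j\<in>J. f j y)"
  using assms(1,2)
  by (induction J rule: finite_induct) (simp_all add: poly_fun_on_const assms(3,4) poly_fun_on_mult)

lemma prod_lagrange_basis:
  fixes t s :: "'f::{finite,field}"
  shows "(\<Prod>c\<in>UNIV - {s}. (t - c) / (s - c)) = (if t = s then 1 else 0)"
proof (cases "t = s")
  case False
  then have "t \<in> UNIV - {s}" by simp
  then show ?thesis using False by (intro trans[OF prod_zero]) auto
qed simp

lemma finite_field_lagrange: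
  fixes f :: "('v \<Rightarrow> 'f::{finite,field}) \<Rightarrow> 'f"
  assumes S: "finite S" and dep: "\<And>y y'. (\<And>v. v \<in> S \<Longrightarrow> y v = y' v) \<Longrightarrow> f y = f y'"
  defines "Z \<equiv> {z. \<forall>v. v \<notin> S \<longrightarrow> z v = 0}"
  shows "finite Z" "f y = (\<Sum>z\<in>Z. f z * (\<Prod>v\<in>S. \<Prod>c\<in>UNIV - {z v}. (y v - c) / (z v - c)))"
proof -
  show fin: "finite Z" using finite_set_of_finite_funs[OF S finite_UNIV, of 0] by (simp add: Z_def)
  define z0 where "z0 v = (if v \<in> S then y v else 0)" for v
  have z0: "z0 \<in> Z" by (simp add: Z_def z0_def)
  have basis: "(\<Prod>v\<in>S. \<Prod>c\<in>UNIV - {z v}. (y v - c) / (z v - c)) = (if z = z0 then 1 else 0)"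
    if "z \<in> Z" for z
  proof (cases "z = z0")
    case False
    then obtain v where "v \<in> S" "z v \<noteq> y v" using \<open>z \<in> Z\<close> by (auto simp: Z_def z0_def fun_eq_iff split: if_splits)
    then show ?thesis using False S by (auto simp: prod_lagrange_basis intro: prod_zero)
  qed (simp add: prod_lagrange_basis z0_def)
  have "(\<Sum>z\<in>Z. f z * (\<Prod>v\<in>S. \<Prod>c\<in>UNIV - {z v}. (y v - c) / (z v - c)))
      = (\<Sum>z\<in>Z. if z = z0 then f z else 0)"
    by (rule sum.cong) (simp_all add: basis)
  also have "\<dots> = f z0" using fin z0 by simp
  also have "f z0 = f y" by (rule dep) (simp add: z0_def)
  finally show "f y = (\<Sum>z\<in>Z. f z * (\<Prod>v\<in>S. \<Prod>c\<in>UNIV - {z v}. (y v - c) / (z v - c)))" ..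
qed

lemma poly_fun_on_finite_field:
  fixes f :: "('v \<Rightarrow> 'f::{finite,field}) \<Rightarrow> 'f"
  assumes S: "finite S" and dep: "\<And>y y'. (\<And>v. v \<in> S \<Longrightarrow> y v = y' v) \<Longrightarrow> f y = f y'"
  shows "poly_fun_on D {M. set_mset M \<subseteq> S} f"
proof -
  let ?Ms = "{M. set_mset M \<subseteq> S}"
  have affine: "poly_fun_on D ?Ms (\<lambda>y. (y v - c) / (z v - c))" if "v \<in> S" for v c and z :: "'v \<Rightarrow> 'f"
  proof -
    have "poly_fun_on D ?Ms (\<lambda>y. inverse (z v - c) * (y v + - c))"
      using that by (intro poly_fun_on_scale poly_fun_on_add poly_fun_on_var poly_fun_on_const) auto
    then show ?thesis by (rule poly_fun_on_cong) (simp add: divide_inverse mult.commute)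
  qed
  note lagrange = finite_field_lagrange[OF S dep]
  have "poly_fun_on D ?Ms (\<lambda>y. \<Sum>z | \<forall>v. v \<notin> S \<longrightarrow> z v = 0.
      f z * (\<Prod>v\<in>S. \<Prod>c\<in>UNIV - {z v}. (y v - c) / (z v - c)))"
    by (intro poly_fun_on_sum poly_fun_on_scale poly_fun_on_prod lagrange(1) affine S) auto
  then show ?thesis by (rule poly_fun_on_cong) (simp add: lagrange(2)[symmetric])
qed

section \<open>Count vectors\<close>

definition counts :: "nat \<Rightarrow> nat \<Rightarrow> (nat \<Rightarrow> nat) set" where
  "counts k m = {c. (\<forall>j. k \<le> j \<longrightarrow> c j = 0) \<and> sum c {..<k} = m}"
definition count_list :: "nat \<Rightarrow> (nat \<Rightarrow> nat) \<Rightarrow> nat list" where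
  "count_list k c = concat (map (\<lambda>j. replicate (c j) j) [0..<k])"
text \<open>The weight \<open>1 / \<Prod>\<^sub>j (c\<^sub>j + 1)!\<close> absorbs the factor \<open>c\<^sub>j + 1\<close> with which a difference
  produces each term of the lower primitive (\<open>count_weight_upd\<close>).\<close>

definition count_weight :: "nat \<Rightarrow> (nat \<Rightarrow> nat) \<Rightarrow> 'f::field" where
  "count_weight k c = (\<Prod>j<k. inverse (of_nat (fact (c j + 1))))"

lemma finite_counts: "finite (counts k m)"
proof -
  have "counts k m \<subseteq> {c. \<forall>x. (x \<in> {..<k} \<longrightarrow> c x \<in> {..m}) \<and> (x \<notin> {..<k} \<longrightarrow> c x = 0)}"
  proof
    fix c assume c: "c \<in> counts k m"
    have "c x \<in> {..m}" if x: "x \<in> {..<k}" for x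
    proof -
      have "c x \<le> sum c {..<k}" by (rule member_le_sum) (use x in auto)
      then show ?thesis using c by (simp add: counts_def)
    qed
    moreover have "c x = 0" if "x \<notin> {..<k}" for x using c that by (simp add: counts_def)
    ultimately show "c \<in> {c. \<forall>x. (x \<in> {..<k} \<longrightarrow> c x \<in> {..m}) \<and> (x \<notin> {..<k} \<longrightarrow> c x = 0)}"
      by blast
  qed
  moreover have "finite {c. \<forall>x. (x \<in> {..<k} \<longrightarrow> c x \<in> {..m}) \<and> (x \<notin> {..<k} \<longrightarrow> c x = (0::nat))}"
    by (rule finite_set_of_finite_funs) auto
  ultimately show ?thesis by (rule finite_subset)
qed

lemma count_list_Suc: "count_list (Suc k) c = count_list k c @ replicate (c k) k"
  by (simp add: count_list_def)

lemma count_list_0: "count_list 0 c = []" by (simp add: count_list_def)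

lemma length_count_list: "length (count_list k c) = sum c {..<k}"
  by (induction k) (simp_all add: count_list_Suc count_list_0)

lemma set_count_list: "set (count_list k c) = {j. j < k \<and> 0 < c j}"
proof (induction k)
  case 0 then show ?case by (simp add: count_list_0)
next
  case (Suc k)
  have "set (count_list (Suc k) c) = {j. j < k \<and> 0 < c j} \<union> (if c k = 0 then {} else {k})"
    unfolding count_list_Suc set_append Suc by auto
  also have "\<dots> = {j. j < Suc k \<and> 0 < c j}" by (auto simp: less_Suc_eq)
  finally show ?case .
qed

lemma mset_count_list: "mset (count_list k c) = (\<Sum>j<k. replicate_mset (c j) j)"
  by (induction k) (simp_all add: count_list_Suc count_list_0)

lemma sum_list_count_list: "sum_list (map H (count_list k c)) = (\<Sum>j<k. of_nat (c j) * (H j :: 'a::semiring_1))"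
  by (induction k) (simp_all add: count_list_Suc count_list_0 sum_list_replicate)

lemma count_list_nth_less: "i < length (count_list k c) \<Longrightarrow> count_list k c ! i < k"
  using nth_mem[of i "count_list k c"] set_count_list[of k c] by auto

lemma length_count_list_counts: "c \<in> counts k m \<Longrightarrow> length (count_list k c) = m"
  by (simp add: length_count_list counts_def)

lemma mset_count_list_upd:
  assumes "j < k"
  shows "mset (count_list k (c(j := Suc (c j)))) = add_mset j (mset (count_list k c))"
proof -
  have "mset (count_list k (c(j := Suc (c j)))) = (\<Sum>i<k. replicate_mset (c i) i + (if i = j then {#j#} else {#}))"
    unfolding mset_count_list by (rule sum.cong) auto
  also have "\<dots> = mset (count_list k c) + {#j#}"
    using assms by (simp add: sum.distrib mset_count_list)
  finally show ?thesis by simp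
qed

lemma sum_fun_upd_nat:
  fixes c :: "nat \<Rightarrow> nat"
  assumes "j < k"
  shows "sum (c(j := x)) {..<k} + c j = sum c {..<k} + (x::nat)"
proof -
  have "sum (c(j := x)) {..<k} = x + sum (c(j := x)) ({..<k} - {j})"
    using assms by (subst sum.remove[where A = "{..<k}" and x = j]) auto
  also have "sum (c(j := x)) ({..<k} - {j}) = sum c ({..<k} - {j})" by (rule sum.cong) auto
  moreover have "sum c {..<k} = c j + sum c ({..<k} - {j})"
    using assms by (subst sum.remove[where A = "{..<k}" and x = j]) auto
  ultimately show ?thesis by simp
qed

lemma counts_upd_Suc: "c \<in> counts k m \<Longrightarrow> j < k \<Longrightarrow> c(j := Suc (c j)) \<in> counts k (Suc m)"
  using sum_fun_upd_nat[of j k c "Suc (c j)"] by (auto simp: counts_def)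

lemma counts_upd_pred: "c \<in> counts k (Suc m) \<Longrightarrow> j < k \<Longrightarrow> 0 < c j \<Longrightarrow> c(j := c j - 1) \<in> counts k m"
  using sum_fun_upd_nat[of j k c "c j - 1"] by (auto simp: counts_def)

lemma counts_0: "counts k 0 = {\<lambda>_. 0}"
  by (auto simp: counts_def fun_eq_iff) (metis lessThan_iff not_le)

lemma count_weight_upd:
  assumes "j < k" "of_nat (c j + 2) \<noteq> (0::'f::field)"
  shows "count_weight k (c(j := Suc (c j))) * of_nat (c j + 2) = (count_weight k c :: 'f)"
proof -
  have r: "(\<Prod>i\<in>{..<k} - {j}. inverse (of_nat (fact ((c(j := Suc (c j))) i + 1))) :: 'f)
      = (\<Prod>i\<in>{..<k} - {j}. inverse (of_nat (fact (c i + 1))))" by (rule prod.cong) auto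
  have "count_weight k (c(j := Suc (c j))) = inverse (of_nat (fact (c j + 2))) *
      (\<Prod>i\<in>{..<k} - {j}. inverse (of_nat (fact ((c(j := Suc (c j))) i + 1))) :: 'f)"
    unfolding count_weight_def using assms(1) by (subst prod.remove[of _ j]) auto
  moreover have "count_weight k c = inverse (of_nat (fact (c j + 1))) * (\<Prod>i\<in>{..<k} - {j}. inverse (of_nat (fact (c i + 1))) :: 'f)"
    unfolding count_weight_def using assms(1) by (subst prod.remove[of _ j]) auto
  moreover have "inverse (of_nat (fact (c j + 2))) * of_nat (c j + 2) = (inverse (of_nat (fact (c j + 1))) :: 'f)"
  proof -
    have e0: "fact (Suc (Suc (c j))) = Suc (Suc (c j)) * (fact (Suc (c j)) :: nat)"
      by (simp only: fact_Suc of_nat_id)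
    have e: "fact (c j + 2) = (c j + 2) * (fact (c j + 1) :: nat)"
      using e0 by (simp only: Suc_eq_plus1 add.assoc one_add_one)
    have "(of_nat (fact (c j + 2)) :: 'f) = of_nat ((c j + 2) * fact (c j + 1))"
      by (rule arg_cong[of _ _ of_nat, OF e])
    then have "(of_nat (fact (c j + 2)) :: 'f) = of_nat (c j + 2) * of_nat (fact (c j + 1))"
      by (simp only: of_nat_mult)
    then show ?thesis using assms(2) by simp
  qed
  ultimately show ?thesis unfolding r by (simp add: mult_ac)
qed

lemma sum_counts_pos_reindex:
  assumes "j < k"
  shows "(\<Sum>c\<in>{c \<in> counts k (Suc m). 0 < c j}. F c) = (\<Sum>c\<in>counts k m. F (c(j := Suc (c j))))"
proof (rule sum.reindex_bij_witness[where i = "\<lambda>c. c(j := Suc (c j))" and j = "\<lambda>c. c(j := c j - 1)"])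
  fix c assume "c \<in> {c \<in> counts k (Suc m). 0 < c j}"
  then show "(c(j := c j - 1))(j := Suc ((c(j := c j - 1)) j)) = c" "c(j := c j - 1) \<in> counts k m"
    using counts_upd_pred[of c k m j] assms by (auto simp: fun_eq_iff)
next
  fix c assume "c \<in> counts k m"
  then show "(c(j := Suc (c j)))(j := (c(j := Suc (c j))) j - 1) = c"
    "c(j := Suc (c j)) \<in> {c \<in> counts k (Suc m). 0 < c j}"
    using counts_upd_Suc[of c k m j] assms by (auto simp: fun_eq_iff)
qed simp

lemma count_le_counts: "c \<in> counts k m \<Longrightarrow> j < k \<Longrightarrow> c j \<le> m"
  using member_le_sum[of j "{..<k}" c] by (simp add: counts_def)

section \<open>The primitive of a form\<close>

definition proj :: "(nat \<Rightarrow> nat) \<Rightarrow> nat \<Rightarrow> (nat \<times> nat \<Rightarrow> 'f::zero) \<Rightarrow> nat \<times> nat \<Rightarrow> 'f" where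
  "proj n j v = iota n j (comp v j)"

definition glue :: "nat \<Rightarrow> (nat \<Rightarrow> nat) \<Rightarrow> (nat \<Rightarrow> nat \<times> nat \<Rightarrow> 'f::zero) \<Rightarrow> nat \<times> nat \<Rightarrow> 'f" where
  "glue k n zs = (\<lambda>(j, c). if j < k \<and> c < n j then zs j (j, c) else 0)"

text \<open>\<open>polar k n M c \<psi>\<close> is the multilinear function of \<open>M + k\<close> points whose diagonal is the
  \<open>c\<close>-term of the primitive: slot \<open>i < M\<close> takes component \<open>count_list k c ! i\<close> of \<open>ys i\<close>, and
  component \<open>j\<close> of the last argument is taken from \<open>ys (M + j)\<close>.\<close>

definition polar :: "nat \<Rightarrow> (nat \<Rightarrow> nat) \<Rightarrow> nat \<Rightarrow> (nat \<Rightarrow> nat)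
    \<Rightarrow> ((nat \<times> nat \<Rightarrow> 'f::field) list \<Rightarrow> (nat \<times> nat \<Rightarrow> 'f) \<Rightarrow> 'f) \<Rightarrow> (nat \<Rightarrow> nat \<times> nat \<Rightarrow> 'f) \<Rightarrow> 'f" where
  "polar k n M c \<psi> ys = \<psi> (map (\<lambda>i. proj n (count_list k c ! i) (ys i)) [0..<M]) (glue k n (\<lambda>j. ys (M + j)))"

definition primitive :: "nat \<Rightarrow> (nat \<Rightarrow> nat) \<Rightarrow> nat \<Rightarrow> ((nat \<times> nat \<Rightarrow> 'f::field) list \<Rightarrow> (nat \<times> nat \<Rightarrow> 'f) \<Rightarrow> 'f)
    \<Rightarrow> (nat \<times> nat \<Rightarrow> 'f) \<Rightarrow> 'f" where
  "primitive k n m \<psi> y = (\<Sum>c\<in>counts k m. count_weight k c * \<psi> (map (\<lambda>j. proj n j y) (count_list k c)) y)"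

lemma proj_in_Gsum: "j < k \<Longrightarrow> proj n j v \<in> Gsum k n"
  by (simp add: proj_def iota_in_Gsum)

lemma proj_add: "proj n j ((u::nat \<times> nat \<Rightarrow> 'f::ring) + v) = proj n j u + proj n j v"
  by (simp add: proj_def comp_add iota_add)

lemma proj_smul: "proj n j (smul a (u::nat \<times> nat \<Rightarrow> 'f::ring)) = smul a (proj n j u)"
  by (simp add: proj_def comp_smul iota_smul)

lemma sum_proj: "(v::nat \<times> nat \<Rightarrow> 'f::comm_monoid_add) \<in> Gsum k n \<Longrightarrow> (\<Sum>j<k. proj n j v) = v"
  unfolding proj_def by (rule Gsum_eq_sum_iota_comp[symmetric])

lemma proj_setcomp_other: "i \<noteq> j \<Longrightarrow> proj n i (setcomp n y j u) = proj n i y"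
  by (simp add: proj_def comp_setcomp_other)

lemma glue_in_Gsum: "glue k n zs \<in> Gsum k n"
  by (auto simp: glue_def Gsum_def idx_def)

lemma glue_const: "y \<in> Gsum k n \<Longrightarrow> glue k n (\<lambda>j. y) = y"
  by (auto simp: glue_def Gsum_def idx_def fun_eq_iff)

lemma glue_upd: "j < k \<Longrightarrow> glue k n (zs(j := w)) = setcomp n (glue k n zs) j (comp w j)"
  by (auto simp: glue_def setcomp_def comp_def fun_eq_iff)

lemma glue_cong: "(\<And>j. j < k \<Longrightarrow> zs j = zs' j) \<Longrightarrow> glue k n zs = glue k n zs'"
  by (auto simp: glue_def fun_eq_iff)

lemma sum_lessThan_add_split: "(\<Sum>s<(a::nat) + b. f s) = (\<Sum>s<a. f s) + (\<Sum>j<b. f (a + j))"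
  by (induction b) (simp_all add: add.assoc)

lemma map_upt_upd:
  assumes "i < M"
  shows "map (\<lambda>i'. f i' ((g(i := z)) i')) [0..<M] = (map (\<lambda>i'. f i' (g i')) [0..<M])[i := f i z]"
  by (rule nth_equalityI) (use assms in \<open>auto simp: nth_list_update\<close>)

lemma polar_slots_in_Gsum:
  assumes "c \<in> counts k M"
  shows "set (map (\<lambda>i. proj n (count_list k c ! i) (ys i)) [0..<M]) \<subseteq> Gsum k n"
proof -
  have "count_list k c ! i < k" if "i < M" for i using count_list_nth_less[of i k c] that length_count_list_counts[OF assms] by simp
  then show ?thesis by (auto simp: proj_in_Gsum)
qed

lemma map_proj_count_list:
  assumes "c \<in> counts k M"
  shows "map (\<lambda>i. proj n (count_list k c ! i) y) [0..<M] = map (\<lambda>j. proj n j y) (count_list k c)"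
  using length_count_list_counts[OF assms] by (intro nth_equalityI) auto

lemma polar_upd_slot:
  assumes "i < M"
  shows "polar k n M c \<psi> (ys(i := w))
    = \<psi> ((map (\<lambda>i. proj n (count_list k c ! i) (ys i)) [0..<M])[i := proj n (count_list k c ! i) w])
        (glue k n (\<lambda>j. ys (M + j)))"
proof -
  have "glue k n (\<lambda>j. (ys(i := w)) (M + j)) = glue k n (\<lambda>j. ys (M + j))"
    using assms by (intro glue_cong) auto
  then show ?thesis
    unfolding polar_def map_upt_upd[OF assms, where f = "\<lambda>i' w. proj n (count_list k c ! i') w"] by simp
qed

lemma polar_upd_comp:
  assumes "j < k"
  shows "polar k n M c \<psi> (ys(M + j := w))
    = \<psi> (map (\<lambda>i. proj n (count_list k c ! i) (ys i)) [0..<M])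
        (setcomp n (glue k n (\<lambda>j. ys (M + j))) j (comp w j))"
proof -
  have slots: "map (\<lambda>i. proj n (count_list k c ! i) ((ys(M + j := w)) i)) [0..<M]
      = map (\<lambda>i. proj n (count_list k c ! i) (ys i)) [0..<M]"
    by (intro map_cong) auto
  have "(\<lambda>j'. (ys(M + j := w)) (M + j')) = (\<lambda>j'. ys (M + j'))(j := w)"
    by (auto simp: fun_eq_iff)
  then have "glue k n (\<lambda>j'. (ys(M + j := w)) (M + j')) = setcomp n (glue k n (\<lambda>j'. ys (M + j'))) j (comp w j)"
    using glue_upd[OF assms] by simp
  then show ?thesis unfolding polar_def slots by (simp only:)
qed

lemma polar_index_cases:
  assumes "c \<in> counts k M" "i \<in> {..<M + k}"
  obtains (slot) "i < M" "count_list k c ! i < k" | (comp) j where "i = M + j" "j < k"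
proof (cases "i < M")
  case True
  then show ?thesis using that(1) count_list_nth_less[of i k c] length_count_list_counts[OF assms(1)] by simp
next
  case False
  then show ?thesis using that(2)[of "i - M"] assms(2) by simp
qed

context
  fixes k M :: nat and n :: "nat \<Rightarrow> nat" and c :: "nat \<Rightarrow> nat"
    and \<psi> :: "(nat \<times> nat \<Rightarrow> 'f::field) list \<Rightarrow> (nat \<times> nat \<Rightarrow> 'f) \<Rightarrow> 'f"
  assumes c: "c \<in> counts k M" and ml: "multilinear_form k n (Suc M) \<psi>"
begin

lemma polar_upd_add:
  assumes "i \<in> {..<M + k}" "u \<in> Gsum k n" "v \<in> Gsum k n"
  shows "polar k n M c \<psi> (ys(i := u + v)) = polar k n M c \<psi> (ys(i := u)) + polar k n M c \<psi> (ys(i := v))"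
proof -
  let ?a = "map (\<lambda>i. proj n (count_list k c ! i) (ys i)) [0..<M]"
  have a: "set ?a \<subseteq> Gsum k n" "length ?a = Suc M - 1"
    using polar_slots_in_Gsum[OF c, where ys = ys] by simp_all
  from c assms(1) show ?thesis
  proof (cases rule: polar_index_cases)
    case slot
    show ?thesis unfolding polar_upd_slot[OF slot(1)] proj_add
      by (rule multilinear_form_slot_add[OF ml a glue_in_Gsum]) (use slot in \<open>simp_all add: proj_in_Gsum\<close>)
  next
    case (comp j)
    show ?thesis unfolding comp(1) polar_upd_comp[OF comp(2)] comp_add
      by (rule multilinear_form_comp_add[OF ml a glue_in_Gsum comp(2)])
        (simp_all add: comp_in_Gcomp[OF assms(2)] comp_in_Gcomp[OF assms(3)])
  qed
qed

lemma polar_upd_smul: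
  assumes "i \<in> {..<M + k}" "u \<in> Gsum k n"
  shows "polar k n M c \<psi> (ys(i := smul s u)) = s * polar k n M c \<psi> (ys(i := u))"
proof -
  let ?a = "map (\<lambda>i. proj n (count_list k c ! i) (ys i)) [0..<M]"
  have a: "set ?a \<subseteq> Gsum k n" "length ?a = Suc M - 1"
    using polar_slots_in_Gsum[OF c, where ys = ys] by simp_all
  from c assms(1) show ?thesis
  proof (cases rule: polar_index_cases)
    case slot
    show ?thesis unfolding polar_upd_slot[OF slot(1)] proj_smul
      by (rule multilinear_form_slot_smul[OF ml a glue_in_Gsum]) (use slot in \<open>simp_all add: proj_in_Gsum\<close>)
  next
    case (comp j)
    show ?thesis unfolding comp(1) polar_upd_comp[OF comp(2)] comp_smul
      by (rule multilinear_form_comp_smul[OF ml a glue_in_Gsum comp(2)]) (simp add: comp_in_Gcomp[OF assms(2)])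
  qed
qed

lemma multilinear_on_polar: "multilinear_on k n {..<M + k} (polar k n M c \<psi>)"
  unfolding multilinear_on_def
proof (intro conjI allI impI)
  fix ys ys' :: "nat \<Rightarrow> nat \<times> nat \<Rightarrow> 'f"
  assume "\<forall>i\<in>{..<M + k}. ys i = ys' i"
  then have "map (\<lambda>i. proj n (count_list k c ! i) (ys i)) [0..<M] = map (\<lambda>i. proj n (count_list k c ! i) (ys' i)) [0..<M]"
    and "glue k n (\<lambda>j. ys (M + j)) = glue k n (\<lambda>j. ys' (M + j))"
    by (auto intro: glue_cong)
  then show "polar k n M c \<psi> ys = polar k n M c \<psi> ys'" unfolding polar_def by (simp only:)
next
  fix ys :: "nat \<Rightarrow> nat \<times> nat \<Rightarrow> 'f" and i and u v :: "nat \<times> nat \<Rightarrow> 'f"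
  assume "i \<in> {..<M + k}" "u \<in> Gsum k n" "v \<in> Gsum k n"
  then show "polar k n M c \<psi> (ys(i := u + v)) = polar k n M c \<psi> (ys(i := u)) + polar k n M c \<psi> (ys(i := v))"
    by (rule polar_upd_add)
next
  fix ys :: "nat \<Rightarrow> nat \<times> nat \<Rightarrow> 'f" and i and u :: "nat \<times> nat \<Rightarrow> 'f" and s :: 'f
  assume "i \<in> {..<M + k}" "u \<in> Gsum k n"
  then show "polar k n M c \<psi> (ys(i := smul s u)) = s * polar k n M c \<psi> (ys(i := u))"
    by (rule polar_upd_smul)
qed

end

lemma polar_diag:
  assumes "c \<in> counts k M" "y \<in> Gsum k n"
  shows "polar k n M c \<psi> (\<lambda>i. y) = \<psi> (map (\<lambda>j. proj n j y) (count_list k c)) y"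
  unfolding polar_def glue_const[OF assms(2)] map_proj_count_list[OF assms(1)] ..

lemma polar_diag_upd_slot:
  assumes "c \<in> counts k M" "s < M" "y \<in> Gsum k n"
  shows "polar k n M c \<psi> ((\<lambda>i. y)(s := b))
    = \<psi> ((map (\<lambda>j. proj n j y) (count_list k c))[s := proj n (count_list k c ! s) b]) y"
  unfolding polar_upd_slot[OF assms(2)] glue_const[OF assms(3)] map_proj_count_list[OF assms(1)] ..

lemma polar_diag_upd_comp:
  assumes "c \<in> counts k M" "j < k" "y \<in> Gsum k n"
  shows "polar k n M c \<psi> ((\<lambda>i. y)(M + j := b))
    = \<psi> (map (\<lambda>j. proj n j y) (count_list k c)) (setcomp n y j (comp b j))"
  unfolding polar_upd_comp[OF assms(2)] glue_const[OF assms(3)] map_proj_count_list[OF assms(1)] ..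

lemma primitive_eq_sum_polar:
  "y \<in> Gsum k n \<Longrightarrow> primitive k n M \<psi> y = (\<Sum>c\<in>counts k M. count_weight k c * polar k n M c \<psi> (\<lambda>i. y))"
  unfolding primitive_def by (rule sum.cong[OF refl]) (simp add: polar_diag)

section \<open>The difference of the primitive\<close>

definition sym_slots ::
  "nat \<Rightarrow> (nat \<Rightarrow> nat) \<Rightarrow> nat \<Rightarrow> ((nat \<times> nat \<Rightarrow> 'f::field) list \<Rightarrow> (nat \<times> nat \<Rightarrow> 'f) \<Rightarrow> 'f) \<Rightarrow> bool" where
  "sym_slots k n m \<psi> \<longleftrightarrow> (\<forall>a d i j. set a \<subseteq> Gsum k n \<longrightarrow> length a = m \<longrightarrow> d \<in> Gsum k n \<longrightarrow>
      i < j \<longrightarrow> j < m \<longrightarrow> \<psi> (a[i := a ! j, j := a ! i]) d = \<psi> a d)"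

definition swap_comp ::
  "nat \<Rightarrow> (nat \<Rightarrow> nat) \<Rightarrow> nat \<Rightarrow> ((nat \<times> nat \<Rightarrow> 'f::field) list \<Rightarrow> (nat \<times> nat \<Rightarrow> 'f) \<Rightarrow> 'f) \<Rightarrow> bool" where
  "swap_comp k n m \<psi> \<longleftrightarrow> (\<forall>a d i j u. set a \<subseteq> Gsum k n \<longrightarrow> length a = m \<longrightarrow> d \<in> Gsum k n \<longrightarrow>
      i < m \<longrightarrow> j < k \<longrightarrow> u \<in> Gcomp n j \<longrightarrow>
      \<psi> (a[i := iota n j u]) d = \<psi> (a[i := iota n j (comp d j)]) (setcomp n d j u))"

lemma swap_invariant_mset_eq:
  assumes "\<And>a i j. set a \<subseteq> A \<Longrightarrow> length a = m \<Longrightarrow> i < j \<Longrightarrow> j < m \<Longrightarrow> F (a[i := a ! j, j := a ! i]) = F a"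
  shows "set a \<subseteq> A \<Longrightarrow> length a = m \<Longrightarrow> mset a = mset b \<Longrightarrow> F a = F b"
  using assms
proof (induction a arbitrary: F m b)
  case Nil then show ?case by simp
next
  case (Cons x a')
  then obtain m' where m: "m = Suc m'" by auto
  have lb: "length b = m" using Cons.prems(2,3) by (metis size_mset)
  have sb: "set b \<subseteq> A" using Cons.prems(1,3) by (metis mset_eq_setD)
  have "x \<in> set b" using Cons.prems(3) by (metis list.set_intros(1) mset_eq_setD)
  then obtain q where q: "q < length b" "b ! q = x" by (auto simp: in_set_conv_nth)
  define b' where "b' = b[0 := b ! q, q := b ! 0]"
  have Fb: "F b' = F b"
  proof (cases "q = 0")
    case True then show ?thesis by (simp add: b'_def)
  next
    case False
    then show ?thesis unfolding b'_def using Cons.prems(4)[OF sb lb, of 0 q] q lb by simp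
  qed
  have lb': "length b' = m" using lb by (simp add: b'_def)
  have b'0: "b' ! 0 = x" using q m lb by (cases "q = 0") (auto simp: b'_def nth_list_update)
  have mb': "mset b' = mset b" unfolding b'_def
    using q lb m by (metis mset_swap zero_less_Suc)
  obtain tb where tb: "b' = x # tb" using lb' m b'0 by (cases b') auto
  have "add_mset x (mset a') = add_mset x (mset tb)"
    using mb' Cons.prems(3) tb by simp
  then have mtb: "mset a' = mset tb" by simp
  have xA: "x \<in> A" using Cons.prems(1) by simp
  have "F (x # a') = F (x # tb)"
  proof (rule Cons.IH[where F = "\<lambda>zs. F (x # zs)" and m = m'])
    show "set a' \<subseteq> A" using Cons.prems(1) by simp
    show "length a' = m'" using Cons.prems(2) m by simp
    show "mset a' = mset tb" by (rule mtb)
    fix zs i j assume zs: "set zs \<subseteq> A" "length zs = m'" "i < j" "j < m'"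
    have "F ((x # zs)[Suc i := (x # zs) ! Suc j, Suc j := (x # zs) ! Suc i]) = F (x # zs)"
      by (rule Cons.prems(4)) (use zs xA m in auto)
    then show "F (x # zs[i := zs ! j, j := zs ! i]) = F (x # zs)" by simp
  qed
  then show ?case using Fb tb by simp
qed

lemma sym_slots_mset_eq:
  assumes "sym_slots k n m \<psi>" "set a \<subseteq> Gsum k n" "length a = m" "d \<in> Gsum k n" "mset a = mset b"
  shows "\<psi> a d = \<psi> b d"
  by (rule swap_invariant_mset_eq[where F = "\<lambda>a. \<psi> a d" and A = "Gsum k n" and m = m])
    (use assms in \<open>auto simp: sym_slots_def\<close>)

lemma multilinear_form_snoc:
  fixes \<psi> :: "(nat \<times> nat \<Rightarrow> 'f::field) list \<Rightarrow> (nat \<times> nat \<Rightarrow> 'f) \<Rightarrow> 'f"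
  assumes "multilinear_form k n (Suc (Suc m)) \<psi>" "b \<in> Gsum k n"
  shows "multilinear_form k n (Suc m) (\<lambda>a. \<psi> (a @ [b]))"
  unfolding multilinear_form_def
proof (rule conjI; intro allI impI)
  fix a :: "(nat \<times> nat \<Rightarrow> 'f) list" and d :: "nat \<times> nat \<Rightarrow> 'f" and i and u v :: "nat \<times> nat \<Rightarrow> 'f" and s
  assume h: "set a \<subseteq> Gsum k n \<and> length a = Suc m - 1 \<and> d \<in> Gsum k n \<and> i < Suc m - 1 \<and>
       u \<in> Gsum k n \<and> v \<in> Gsum k n"
  then have e: "a[i := w] @ [b] = (a @ [b])[i := w]" for w by (simp add: list_update_append1)
  have h2: "set (a @ [b]) \<subseteq> Gsum k n \<and> length (a @ [b]) = Suc (Suc m) - 1 \<and> d \<in> Gsum k n \<and> i < Suc (Suc m) - 1 \<and>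
       u \<in> Gsum k n \<and> v \<in> Gsum k n" using h assms(2) by auto
  show "\<psi> (a[i := addp u v] @ [b]) d = \<psi> (a[i := u] @ [b]) d + \<psi> (a[i := v] @ [b]) d \<and>
        \<psi> (a[i := smul s u] @ [b]) d = s * \<psi> (a[i := u] @ [b]) d"
    unfolding e using assms(1) h2 unfolding multilinear_form_def by blast
next
  fix a :: "(nat \<times> nat \<Rightarrow> 'f) list" and d :: "nat \<times> nat \<Rightarrow> 'f" and j and u v :: "nat \<Rightarrow> 'f" and s
  assume h: "set a \<subseteq> Gsum k n \<and> length a = Suc m - 1 \<and> d \<in> Gsum k n \<and> j < k \<and> u \<in> Gcomp n j \<and> v \<in> Gcomp n j"
  have h2: "set (a @ [b]) \<subseteq> Gsum k n \<and> length (a @ [b]) = Suc (Suc m) - 1 \<and> d \<in> Gsum k n \<and> j < k \<and> u \<in> Gcomp n j \<and> v \<in> Gcomp n j"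
    using h assms(2) by auto
  show "\<psi> (a @ [b]) (setcomp n d j (addp u v)) = \<psi> (a @ [b]) (setcomp n d j u) + \<psi> (a @ [b]) (setcomp n d j v) \<and>
        \<psi> (a @ [b]) (setcomp n d j (smul s u)) = s * \<psi> (a @ [b]) (setcomp n d j u)"
    using assms(1) h2 unfolding multilinear_form_def by blast
qed

lemma sym_slots_snoc:
  fixes \<psi> :: "(nat \<times> nat \<Rightarrow> 'f::field) list \<Rightarrow> (nat \<times> nat \<Rightarrow> 'f) \<Rightarrow> 'f"
  assumes "sym_slots k n (Suc m) \<psi>" "b \<in> Gsum k n"
  shows "sym_slots k n m (\<lambda>a. \<psi> (a @ [b]))"
  unfolding sym_slots_def
proof (intro allI impI)
  fix a :: "(nat \<times> nat \<Rightarrow> 'f) list" and d :: "nat \<times> nat \<Rightarrow> 'f" and i j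
  assume h: "set a \<subseteq> Gsum k n" "length a = m" "d \<in> Gsum k n" "i < j" "j < m"
  have e: "a[i := a ! j, j := a ! i] @ [b] = (a @ [b])[i := (a @ [b]) ! j, j := (a @ [b]) ! i]"
    using h by (simp add: list_update_append1 nth_append)
  show "\<psi> (a[i := a ! j, j := a ! i] @ [b]) d = \<psi> (a @ [b]) d"
    unfolding e using assms h unfolding sym_slots_def by simp
qed

lemma swap_comp_snoc:
  fixes \<psi> :: "(nat \<times> nat \<Rightarrow> 'f::field) list \<Rightarrow> (nat \<times> nat \<Rightarrow> 'f) \<Rightarrow> 'f"
  assumes "swap_comp k n (Suc m) \<psi>" "b \<in> Gsum k n"
  shows "swap_comp k n m (\<lambda>a. \<psi> (a @ [b]))"
  unfolding swap_comp_def
proof (intro allI impI)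
  fix a :: "(nat \<times> nat \<Rightarrow> 'f) list" and d :: "nat \<times> nat \<Rightarrow> 'f" and i j and u :: "nat \<Rightarrow> 'f"
  assume h: "set a \<subseteq> Gsum k n" "length a = m" "d \<in> Gsum k n" "i < m" "j < k" "u \<in> Gcomp n j"
  have e: "a[i := w] @ [b] = (a @ [b])[i := w]" for w using h by (simp add: list_update_append1)
  show "\<psi> (a[i := iota n j u] @ [b]) d = \<psi> (a[i := iota n j (comp d j)] @ [b]) (setcomp n d j u)"
    unfolding e using assms h unfolding swap_comp_def by simp
qed

context
  fixes k :: nat and n :: "nat \<Rightarrow> nat" and M :: nat
    and \<psi> :: "(nat \<times> nat \<Rightarrow> 'f::field) list \<Rightarrow> (nat \<times> nat \<Rightarrow> 'f) \<Rightarrow> 'f"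
begin

definition slot_update_term :: "(nat \<Rightarrow> nat) \<Rightarrow> (nat \<times> nat \<Rightarrow> 'f) \<Rightarrow> (nat \<times> nat \<Rightarrow> 'f) \<Rightarrow> nat \<Rightarrow> 'f" where
  "slot_update_term c y b s = \<psi> ((map (\<lambda>j. proj n j y) (count_list k c))[s := proj n (count_list k c ! s) b]) y"

definition comp_update_term :: "(nat \<Rightarrow> nat) \<Rightarrow> (nat \<times> nat \<Rightarrow> 'f) \<Rightarrow> (nat \<times> nat \<Rightarrow> 'f) \<Rightarrow> nat \<Rightarrow> 'f" where
  "comp_update_term c y b j = \<psi> (map (\<lambda>j. proj n j y) (count_list k c)) (setcomp n y j (comp b j))"

definition partial_term :: "(nat \<Rightarrow> nat) \<Rightarrow> (nat \<times> nat \<Rightarrow> 'f) \<Rightarrow> (nat \<times> nat \<Rightarrow> 'f) \<Rightarrow> nat \<Rightarrow> 'f" where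
  "partial_term c y b j = \<psi> (map (\<lambda>j. proj n j y) (count_list k (c(j := c j - 1))) @ [proj n j b]) y"

definition shift_error :: "(nat \<times> nat \<Rightarrow> 'f) \<Rightarrow> (nat \<times> nat \<Rightarrow> 'f) \<Rightarrow> 'f" where
  "shift_error b y = (\<Sum>c\<in>counts k M. count_weight k c * (\<Sum>s<M + k.
      polar k n M c \<psi> ((\<lambda>i. y + (if i < s then b else 0))(s := b)) - polar k n M c \<psi> ((\<lambda>i. y)(s := b))))"

definition missing_comp_terms :: "(nat \<times> nat \<Rightarrow> 'f) \<Rightarrow> (nat \<times> nat \<Rightarrow> 'f) \<Rightarrow> 'f" where
  "missing_comp_terms b y =
     (\<Sum>j<k. \<Sum>c\<in>{c \<in> counts k M. c j = 0}. count_weight k c * comp_update_term c y b j)"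

context
  assumes ml: "multilinear_form k n (Suc M) \<psi>" and sy: "sym_slots k n M \<psi>" and sw: "swap_comp k n M \<psi>"
begin

lemma slot_update_eq_partial_term:
  assumes c: "c \<in> counts k M" and s: "s < M" and y: "y \<in> Gsum k n"
  shows "slot_update_term c y b s = partial_term c y b (count_list k c ! s)"
proof -
  let ?L = "count_list k c"
  let ?j = "?L ! s"
  let ?c' = "c(?j := c ?j - 1)"
  let ?A = "map (\<lambda>j. proj n j y) ?L"
  have s_L: "s < length ?L" using s length_count_list_counts[OF c] by simp
  then have j: "?j < k" "0 < c ?j" using nth_mem[OF s_L] by (auto simp: set_count_list)
  have "?c'(?j := Suc (?c' ?j)) = c" using j by (auto simp: fun_eq_iff)
  then have mset_L: "mset ?L = add_mset ?j (mset (count_list k ?c'))"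
    using mset_count_list_upd[OF j(1), of ?c'] by simp
  have "mset (?A[s := proj n ?j b]) = add_mset (proj n ?j b) (mset ?A - {#?A ! s#})"
    by (rule mset_update) (simp add: s_L)
  also have "mset ?A - {#?A ! s#} = image_mset (\<lambda>j. proj n j y) (mset (count_list k ?c'))"
    using s_L by (simp add: mset_L)
  finally have "mset (?A[s := proj n ?j b]) = mset (map (\<lambda>j. proj n j y) (count_list k ?c') @ [proj n ?j b])"
    by simp
  moreover have "set (?A[s := proj n ?j b]) \<subseteq> Gsum k n"
    using set_update_subset_insert[of ?A s "proj n ?j b"] j(1) by (auto simp: set_count_list proj_in_Gsum)
  moreover have "length (?A[s := proj n ?j b]) = M" using length_count_list_counts[OF c] by simp
  ultimately show ?thesis
    unfolding slot_update_term_def partial_term_def using sym_slots_mset_eq[OF sy _ _ y] by blast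
qed

lemma sum_slot_updates:
  assumes c: "c \<in> counts k M" and y: "y \<in> Gsum k n"
  shows "(\<Sum>s<M. slot_update_term c y b s) = (\<Sum>j<k. of_nat (c j) * partial_term c y b j)"
proof -
  have "(\<Sum>s<M. slot_update_term c y b s) = (\<Sum>s<M. partial_term c y b (count_list k c ! s))"
    by (rule sum.cong[OF refl]) (simp add: slot_update_eq_partial_term[OF c _ y])
  also have "\<dots> = sum_list (map (partial_term c y b) (count_list k c))"
    unfolding sum_list_sum_nth using length_count_list_counts[OF c] by (simp add: atLeast0LessThan)
  also have "\<dots> = (\<Sum>j<k. of_nat (c j) * partial_term c y b j)" by (rule sum_list_count_list)
  finally show ?thesis .
qed

text \<open>Hypothesis (ii) moves the \<open>j\<close>-th component of \<open>b\<close> from the last argument into a slot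
  carrying \<open>proj n j y\<close>.\<close>

lemma comp_update_eq_partial_term:
  assumes c: "c \<in> counts k M" and y: "y \<in> Gsum k n" and b: "b \<in> Gsum k n"
    and j: "j < k" and cj: "0 < c j"
  shows "comp_update_term c y b j = partial_term c y b j"
proof -
  let ?L = "count_list k c"
  let ?A = "map (\<lambda>j. proj n j y) ?L"
  let ?d = "setcomp n y j (comp b j)"
  have "j \<in> set ?L" using j cj by (simp add: set_count_list)
  then obtain s where s: "s < length ?L" "?L ! s = j" by (auto simp: in_set_conv_nth)
  have "s < M" using s length_count_list_counts[OF c] by simp
  have A: "set ?A \<subseteq> Gsum k n" "length ?A = M"
    using length_count_list_counts[OF c] by (auto simp: set_count_list proj_in_Gsum)
  have "\<psi> (?A[s := iota n j (comp y j)]) ?d = \<psi> (?A[s := iota n j (comp ?d j)]) (setcomp n ?d j (comp y j))"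
    using sw A setcomp_in_Gsum[OF y j] \<open>s < M\<close> j comp_in_Gcomp[OF y] unfolding swap_comp_def by blast
  moreover have "?A[s := iota n j (comp y j)] = ?A"
    using s list_update_id[of ?A s] by (simp add: proj_def)
  moreover have "comp ?d j = comp b j" by (rule comp_setcomp_same[OF comp_in_Gcomp[OF b]])
  moreover have "setcomp n ?d j (comp y j) = y" by (simp add: setcomp_setcomp setcomp_comp[OF y])
  ultimately have "comp_update_term c y b j = slot_update_term c y b s"
    using s unfolding comp_update_term_def slot_update_term_def by (simp add: proj_def)
  also have "\<dots> = partial_term c y b j"
    using slot_update_eq_partial_term[OF c \<open>s < M\<close> y] s by simp
  finally show ?thesis .
qed

lemma sum_slot_and_comp_updates:
  assumes c: "c \<in> counts k M" and y: "y \<in> Gsum k n" and b: "b \<in> Gsum k n"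
  shows "(\<Sum>s<M. slot_update_term c y b s) + (\<Sum>j<k. comp_update_term c y b j)
     = (\<Sum>j<k. if 0 < c j then of_nat (c j + 1) * partial_term c y b j else 0)
     + (\<Sum>j<k. if c j = 0 then comp_update_term c y b j else 0)"
proof -
  have "of_nat (c j) * partial_term c y b j + comp_update_term c y b j
      = (if 0 < c j then of_nat (c j + 1) * partial_term c y b j else 0)
      + (if c j = 0 then comp_update_term c y b j else 0)" if "j \<in> {..<k}" for j
    using comp_update_eq_partial_term[OF c y b, of j] that by (cases "c j = 0") (simp_all add: distrib_right)
  then show ?thesis
    unfolding sum_slot_updates[OF c y] sum.distrib[symmetric] by (rule sum.cong[OF refl])
qed

lemma last_slot_sum_proj:
  assumes "M = Suc m" "set B \<subseteq> Gsum k n" "length B = m" "y \<in> Gsum k n" "b \<in> Gsum k n"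
  shows "(\<Sum>j<k. \<psi> (B @ [proj n j b]) y) = \<psi> (B @ [b]) y"
proof -
  have upd_last: "(B @ [b])[m := w] = B @ [w]" for w
    using list_update_length[of B b "[]" w] assms(3) by simp
  have "\<psi> ((B @ [b])[m := \<Sum>j<k. proj n j b]) y = (\<Sum>j<k. \<psi> ((B @ [b])[m := proj n j b]) y)"
    by (rule multilinear_form_slot_sum[OF ml _ _ assms(4)]) (use assms in \<open>auto simp: proj_in_Gsum\<close>)
  then show ?thesis unfolding upd_last sum_proj[OF assms(5)] by simp
qed

lemma sum_partial_terms_eq_primitive:
  assumes M: "M = Suc m" and y: "y \<in> Gsum k n" and b: "b \<in> Gsum k n"
    and char: "\<And>t. 0 < t \<Longrightarrow> t \<le> Suc M \<Longrightarrow> of_nat t \<noteq> (0::'f)"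
  shows "(\<Sum>c\<in>counts k M. count_weight k c * (\<Sum>j<k. if 0 < c j then of_nat (c j + 1) * partial_term c y b j else 0))
       = primitive k n m (\<lambda>a. \<psi> (a @ [b])) y"
proof -
  let ?B = "\<lambda>c. map (\<lambda>j. proj n j y) (count_list k c)"
  have weight: "count_weight k (c(j := Suc (c j)))
        * (of_nat ((c(j := Suc (c j))) j + 1) * partial_term (c(j := Suc (c j))) y b j)
      = count_weight k c * \<psi> (?B c @ [proj n j b]) y" if "c \<in> counts k m" "j < k" for c j
  proof -
    have "of_nat (c j + 2) \<noteq> (0 :: 'f)" using count_le_counts[OF that] M by (intro char) auto
    then have "count_weight k (c(j := Suc (c j))) * of_nat (c j + 2) = (count_weight k c :: 'f)"
      by (rule count_weight_upd[OF that(2)])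
    then show ?thesis by (simp add: partial_term_def mult.assoc[symmetric])
  qed
  have "(\<Sum>c\<in>counts k M. count_weight k c * (\<Sum>j<k. if 0 < c j then of_nat (c j + 1) * partial_term c y b j else 0))
      = (\<Sum>j<k. \<Sum>c\<in>{c \<in> counts k M. 0 < c j}. count_weight k c * (of_nat (c j + 1) * partial_term c y b j))"
    by (simp add: sum_distrib_left sum.inter_filter finite_counts if_distrib sum.swap[of _ "counts k M"] cong: if_cong)
  also have "\<dots> = (\<Sum>j<k. \<Sum>c\<in>counts k m. count_weight k c * \<psi> (?B c @ [proj n j b]) y)"
    unfolding M
    by (rule sum.cong[OF refl], simp only: lessThan_iff sum_counts_pos_reindex,
        rule sum.cong[OF refl], rule weight) simp_all
  also have "\<dots> = (\<Sum>c\<in>counts k m. count_weight k c * (\<Sum>j<k. \<psi> (?B c @ [proj n j b]) y))"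
    by (simp add: sum_distrib_left sum.swap[of _ "{..<k}"])
  also have "\<dots> = (\<Sum>c\<in>counts k m. count_weight k c * \<psi> (?B c @ [b]) y)"
  proof (rule sum.cong[OF refl])
    fix c assume c: "c \<in> counts k m"
    have "set (?B c) \<subseteq> Gsum k n" by (auto simp: set_count_list proj_in_Gsum)
    then show "count_weight k c * (\<Sum>j<k. \<psi> (?B c @ [proj n j b]) y) = count_weight k c * \<psi> (?B c @ [b]) y"
      using last_slot_sum_proj[OF M _ _ y b] length_count_list_counts[OF c] by simp
  qed
  finally show ?thesis by (simp add: primitive_def)
qed

lemma polar_diag_diff:
  assumes c: "c \<in> counts k M" and y: "y \<in> Gsum k n" and b: "b \<in> Gsum k n"
  shows "polar k n M c \<psi> (\<lambda>i. y + b) - polar k n M c \<psi> (\<lambda>i. y)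
     = (\<Sum>s<M. slot_update_term c y b s) + (\<Sum>j<k. comp_update_term c y b j)
     + (\<Sum>s<M + k. polar k n M c \<psi> ((\<lambda>i. y + (if i < s then b else 0))(s := b))
                  - polar k n M c \<psi> ((\<lambda>i. y)(s := b)))"
proof -
  have "polar k n M c \<psi> (\<lambda>i. y + b) - polar k n M c \<psi> (\<lambda>i. y + 0)
      = (\<Sum>s<M + k. polar k n M c \<psi> ((\<lambda>i. y + (if i < s then b else 0))(s := b - 0)))"
    by (rule multilinear_on_shift_diff[OF _ multilinear_on_polar[OF c ml] y]) (simp_all add: b Gsum_zero)
  also have "\<dots> = (\<Sum>s<M + k. polar k n M c \<psi> ((\<lambda>i. y)(s := b)))
      + (\<Sum>s<M + k. polar k n M c \<psi> ((\<lambda>i. y + (if i < s then b else 0))(s := b))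
                   - polar k n M c \<psi> ((\<lambda>i. y)(s := b)))"
    unfolding diff_0_right by (simp add: sum_subtractf)
  also have "(\<Sum>s<M + k. polar k n M c \<psi> ((\<lambda>i. y)(s := b)))
      = (\<Sum>s<M. slot_update_term c y b s) + (\<Sum>j<k. comp_update_term c y b j)"
    unfolding sum_lessThan_add_split slot_update_term_def comp_update_term_def
    by (simp add: polar_diag_upd_slot[OF c _ y] polar_diag_upd_comp[OF c _ y])
  finally show ?thesis unfolding add_0_right .
qed

lemma Delta_primitive:
  assumes M: "M = Suc m" and y: "y \<in> Gsum k n" and b: "b \<in> Gsum k n"
    and char: "\<And>t. 0 < t \<Longrightarrow> t \<le> Suc M \<Longrightarrow> of_nat t \<noteq> (0::'f)"
  shows "Delta b (primitive k n M \<psi>) y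
    = primitive k n m (\<lambda>a. \<psi> (a @ [b])) y + shift_error b y + missing_comp_terms b y"
proof -
  have missing: "(\<Sum>c\<in>counts k M. count_weight k c * (\<Sum>j<k. if c j = 0 then comp_update_term c y b j else 0))
      = missing_comp_terms b y"
    unfolding missing_comp_terms_def
    by (simp add: sum_distrib_left sum.inter_filter finite_counts if_distrib sum.swap[of _ "counts k M"] cong: if_cong)
  have pos: "(\<Sum>c\<in>counts k M. count_weight k c * (\<Sum>j<k. if 0 < c j then of_nat (c j + 1) * partial_term c y b j else 0))
      = primitive k n m (\<lambda>a. \<psi> (a @ [b])) y"
    by (rule sum_partial_terms_eq_primitive[OF M y b char])
  have "Delta b (primitive k n M \<psi>) y
      = (\<Sum>c\<in>counts k M. count_weight k c * (polar k n M c \<psi> (\<lambda>i. y + b) - polar k n M c \<psi> (\<lambda>i. y)))"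
    unfolding Delta_apply primitive_eq_sum_polar[OF Gsum_add[OF y b]] primitive_eq_sum_polar[OF y]
    by (simp add: sum_subtractf right_diff_distrib)
  also have "\<dots> = (\<Sum>c\<in>counts k M. count_weight k c * (\<Sum>j<k. if 0 < c j then of_nat (c j + 1) * partial_term c y b j else 0))
      + (\<Sum>c\<in>counts k M. count_weight k c * (\<Sum>j<k. if c j = 0 then comp_update_term c y b j else 0))
      + shift_error b y"
    unfolding shift_error_def
    by (simp add: polar_diag_diff[OF _ y b] sum_slot_and_comp_updates[OF _ y b] sum.distrib distrib_left)
  also have "\<dots> = primitive k n m (\<lambda>a. \<psi> (a @ [b])) y + shift_error b y + missing_comp_terms b y"
    unfolding missing pos by (simp only: ac_simps)
  finally show ?thesis .
qed

lemma shift_error_deg_le: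
  assumes b: "b \<in> Gsum k n"
  shows "deg_le k n (M + k - 2) (shift_error b)"
  unfolding shift_error_def
proof (intro deg_le_sum deg_le_scale)
  fix c s assume c: "c \<in> counts k M" and s: "s \<in> {..<M + k}"
  have "multilinear_on k n ({..<M + k} - {s}) (\<lambda>ys. polar k n M c \<psi> (ys(s := b)))"
    by (rule multilinear_on_fix[OF multilinear_on_polar[OF c ml] b])
  then have "deg_le k n (card ({..<M + k} - {s}) - 1)
     (\<lambda>y. polar k n M c \<psi> ((\<lambda>i. y + (if i < s then b else 0))(s := b)) - polar k n M c \<psi> ((\<lambda>i. y)(s := b)))"
    by (rule multilinear_on_diag_diff_deg_le[OF finite_Diff[OF finite_lessThan]]) (simp add: b Gsum_zero)
  moreover have "card ({..<M + k} - {s}) - 1 = M + k - 2" using s by simp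
  ultimately show "deg_le k n (M + k - 2) (\<lambda>y. polar k n M c \<psi> ((\<lambda>i. y + (if i < s then b else 0))(s := b))
      - polar k n M c \<psi> ((\<lambda>i. y)(s := b)))"
    by simp
qed

lemma comp_indep_missing_comp_terms:
  assumes "j < k"
  shows "comp_indep k n j (\<lambda>y. \<Sum>c\<in>{c \<in> counts k M. c j = 0}. count_weight k c * comp_update_term c y b j)"
proof (intro comp_indep_sum comp_indep_scale)
  fix c assume "c \<in> {c \<in> counts k M. c j = 0}"
  then have proj_eq: "proj n i (setcomp n z j 0) = proj n i z" if "i \<in> set (count_list k c)" for i and z :: "nat \<times> nat \<Rightarrow> 'f"
    using that by (intro proj_setcomp_other) (auto simp: set_count_list)
  show "comp_indep k n j (\<lambda>y. comp_update_term c y b j)"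
    unfolding comp_indep_def comp_update_term_def setcomp_setcomp
    by (simp add: proj_eq cong: map_cong)
qed

end

end

section \<open>Recovering the form from its primitive\<close>

lemma incl_excl_multilinear_form:
  assumes "multilinear_form k n r \<psi>" "set a \<subseteq> Gsum k n" "length a = r - 1" "x \<in> Gsum k n"
  shows "incl_excl k n (\<psi> a) x = \<psi> a x"
  by (rule incl_excl_eq_self[where k = k and n = n])
    (simp_all add: multilinear_form_comp_zero[OF assms(1-3)] assms(4))

lemma primitive_0: "primitive k n 0 \<psi> y = \<psi> [] y"
proof -
  have "count_list k (\<lambda>_. 0) = []" using set_count_list[of k "\<lambda>_. 0"] by simp
  then show ?thesis by (simp add: primitive_def counts_0 count_weight_def)
qed

lemma incl_excl_Deltas_missing_comp_terms_eq_0: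
  assumes ml: "multilinear_form k n (Suc M) \<psi>" and sy: "sym_slots k n M \<psi>" and sw: "swap_comp k n M \<psi>"
    and "set hs \<subseteq> Gsum k n" "x \<in> Gsum k n"
  shows "incl_excl k n (Deltas hs (missing_comp_terms k n M \<psi> b)) x = 0"
proof -
  have "incl_excl k n (Deltas hs (\<lambda>y. \<Sum>c\<in>{c \<in> counts k M. c j = 0}.
      count_weight k c * comp_update_term k n \<psi> c y b j)) x = 0" if "j < k" for j
    using comp_indep_Deltas[OF assms(4) comp_indep_missing_comp_terms[OF ml sy sw that]] that assms(5)
    by (rule incl_excl_comp_indep_eq_0)
  then show ?thesis
    unfolding missing_comp_terms_def[abs_def] Deltas_sum incl_excl_sum by simp
qed

text \<open>Each difference lowers \<open>m\<close> by one up to two error terms, one of too small degree and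
  one not depending on some component; \<open>incl_excl k\<close> annihilates both.\<close>

lemma incl_excl_Deltas_primitive:
  fixes \<psi> :: "(nat \<times> nat \<Rightarrow> 'f::field) list \<Rightarrow> (nat \<times> nat \<Rightarrow> 'f) \<Rightarrow> 'f"
  assumes k: "1 \<le> k"
  shows "multilinear_form k n (Suc m) \<psi> \<Longrightarrow> sym_slots k n m \<psi> \<Longrightarrow> swap_comp k n m \<psi> \<Longrightarrow>
    (\<And>t. 0 < t \<Longrightarrow> t \<le> Suc m \<Longrightarrow> of_nat t \<noteq> (0::'f)) \<Longrightarrow>
    set as \<subseteq> Gsum k n \<Longrightarrow> length as = m \<Longrightarrow> x \<in> Gsum k n \<Longrightarrow>
    incl_excl k n (Deltas as (primitive k n m \<psi>)) x = \<psi> as x"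
proof (induction m arbitrary: \<psi> as x)
  case 0
  then show ?case using incl_excl_multilinear_form[OF "0.prems"(1), of "[]"] by (simp add: primitive_0)
next
  case (Suc m)
  note ml = Suc.prems(1) and sy = Suc.prems(2) and sw = Suc.prems(3) and x = Suc.prems(7)
  obtain as' b where as: "as = as' @ [b]" using Suc.prems(6) by (cases as rule: rev_cases) auto
  have b: "b \<in> Gsum k n" and as': "set as' \<subseteq> Gsum k n" "length as' = m"
    using Suc.prems(5,6) as by auto
  have IH: "incl_excl k n (Deltas as' (primitive k n m (\<lambda>a. \<psi> (a @ [b])))) x = \<psi> (as' @ [b]) x"
    by (rule Suc.IH[OF multilinear_form_snoc[OF ml b] sym_slots_snoc[OF sy b] swap_comp_snoc[OF sw b]
          _ as' x]) (use Suc.prems(4) in auto)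
  have shift: "incl_excl k n (Deltas as' (shift_error k n (Suc m) \<psi> b)) x = 0"
    by (rule incl_excl_Deltas_deg_le_eq_0[OF shift_error_deg_le[OF ml sy sw b] _ as'(1) x])
      (use k as'(2) in simp)
  have missing: "incl_excl k n (Deltas as' (missing_comp_terms k n (Suc m) \<psi> b)) x = 0"
    by (rule incl_excl_Deltas_missing_comp_terms_eq_0[OF ml sy sw as'(1) x])
  have "incl_excl k n (Deltas as (primitive k n (Suc m) \<psi>)) x
      = incl_excl k n (Deltas as' (\<lambda>y. primitive k n m (\<lambda>a. \<psi> (a @ [b])) y
          + shift_error k n (Suc m) \<psi> b y + missing_comp_terms k n (Suc m) \<psi> b y)) x"
    unfolding as Deltas_snoc
    using Delta_primitive[OF ml sy sw refl _ b Suc.prems(4)]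
    by (intro incl_excl_cong[OF Deltas_cong[OF as'(1)] x]) simp_all
  also have "\<dots> = \<psi> as x"
    unfolding Deltas_add incl_excl_add IH shift missing as by simp
  finally show ?case .
qed

section \<open>Polynomiality\<close>

definition Pkr_monomials :: "nat \<Rightarrow> (nat \<Rightarrow> nat) \<Rightarrow> nat \<Rightarrow> (nat \<times> nat) multiset set" where
  "Pkr_monomials k n r = {M. size M = k + r - 1 \<and> set_mset M \<subseteq> idx k n \<and> (\<forall>i<k. \<exists>c. (i, c) \<in># M)}"

lemma polar_unit_points_eq_0:
  fixes \<psi> :: "(nat \<times> nat \<Rightarrow> 'f::field) list \<Rightarrow> (nat \<times> nat \<Rightarrow> 'f) \<Rightarrow> 'f"
  assumes ml: "multilinear_form k n (Suc m) \<psi>" and c: "c \<in> counts k m" and i: "i < k"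
    and "fst (vs (m + i)) \<noteq> i"
  shows "polar k n m c \<psi> (\<lambda>l. unit_point (vs l)) = 0"
proof -
  let ?zs = "\<lambda>j. unit_point (vs (m + j)) :: nat \<times> nat \<Rightarrow> 'f"
  have "comp (?zs i) i = 0"
    using assms(4) by (cases "vs (m + i)") (auto simp: comp_def unit_point_def fun_eq_iff)
  moreover have "?zs(i := ?zs i) = ?zs" by (rule fun_upd_triv)
  ultimately have glue_eq: "glue k n ?zs = setcomp n (glue k n ?zs) i 0"
    using glue_upd[OF i, of n ?zs "?zs i"] by simp
  let ?a = "map (\<lambda>l. proj n (count_list k c ! l) (unit_point (vs l))) [0..<m]"
  have a: "set ?a \<subseteq> Gsum k n" "length ?a = Suc m - 1"
    using polar_slots_in_Gsum[OF c, where ys = "\<lambda>l. unit_point (vs l)"] by simp_all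
  have "polar k n m c \<psi> (\<lambda>l. unit_point (vs l)) = \<psi> ?a (glue k n ?zs)" unfolding polar_def ..
  also have "\<dots> = \<psi> ?a (setcomp n (glue k n ?zs) i 0)" using glue_eq by (rule arg_cong)
  also have "\<dots> = 0" by (rule multilinear_form_comp_zero[OF ml a glue_in_Gsum i])
  finally show ?thesis .
qed

lemma poly_fun_on_polar_diag:
  fixes \<psi> :: "(nat \<times> nat \<Rightarrow> 'f::field) list \<Rightarrow> (nat \<times> nat \<Rightarrow> 'f) \<Rightarrow> 'f"
  assumes ml: "multilinear_form k n (Suc m) \<psi>" and c: "c \<in> counts k m"
  shows "poly_fun_on (Gsum k n) (Pkr_monomials k n (Suc m)) (\<lambda>y. polar k n m c \<psi> (\<lambda>i. y))"
proof -
  let ?S = "{..<m + k}"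
  let ?mon = "\<lambda>vs. image_mset vs (mset_set ?S)"
  have "poly_fun_on (Gsum k n) (Pkr_monomials k n (Suc m))
      (\<lambda>y. \<Sum>vs\<in>coord_choices k n ?S. polar k n m c \<psi> (\<lambda>i. unit_point (vs i)) * prod_mset (image_mset y (?mon vs)))"
  proof (rule poly_fun_on_monomials[OF finite_coord_choices[OF finite_lessThan]])
    fix vs assume vs: "vs \<in> coord_choices k n ?S" and nz: "polar k n m c \<psi> (\<lambda>i. unit_point (vs i)) \<noteq> 0"
    have "\<exists>c. (i, c) \<in># ?mon vs" if "i < k" for i
    proof -
      have "fst (vs (m + i)) = i" using polar_unit_points_eq_0[OF ml c that, of vs] nz by blast
      moreover have "vs (m + i) \<in># ?mon vs" using that by simp
      ultimately show ?thesis by (metis prod.collapse)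
    qed
    then show "?mon vs \<in> Pkr_monomials k n (Suc m)"
      using vs by (auto simp: Pkr_monomials_def coord_choices_def)
  qed
  moreover have "(\<Sum>vs\<in>coord_choices k n ?S. polar k n m c \<psi> (\<lambda>i. unit_point (vs i)) * prod_mset (image_mset y (?mon vs)))
      = polar k n m c \<psi> (\<lambda>i. y)"
    if "y \<in> Gsum k n" for y
    using multilinear_on_expand[OF finite_lessThan multilinear_on_polar[OF c ml], of "\<lambda>i. y"] that
    by (simp add: prod_unfold_prod_mset image_mset.compositionality o_def mult.commute)
  ultimately show ?thesis by (rule poly_fun_on_cong)
qed

lemma primitive_in_Pkr:
  fixes \<psi> :: "(nat \<times> nat \<Rightarrow> 'f::field) list \<Rightarrow> (nat \<times> nat \<Rightarrow> 'f) \<Rightarrow> 'f"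
  assumes "multilinear_form k n (Suc m) \<psi>"
  obtains P where "in_Pkr k n (Suc m) P" "\<And>y. y \<in> Gsum k n \<Longrightarrow> primitive k n m \<psi> y = poly_eval P y"
proof -
  have "poly_fun_on (Gsum k n) (Pkr_monomials k n (Suc m))
      (\<lambda>y. \<Sum>c\<in>counts k m. count_weight k c * polar k n m c \<psi> (\<lambda>i. y))"
    by (intro poly_fun_on_sum finite_counts poly_fun_on_scale poly_fun_on_polar_diag[OF assms])
  then have "poly_fun_on (Gsum k n) (Pkr_monomials k n (Suc m)) (primitive k n m \<psi>)"
    by (rule poly_fun_on_cong) (simp add: primitive_eq_sum_polar)
  then show ?thesis
    using that unfolding poly_fun_on_def in_Pkr_def Pkr_monomials_def by auto
qed

definition assign_list :: "nat \<Rightarrow> (nat \<Rightarrow> nat) \<Rightarrow> nat \<Rightarrow> ((nat \<times> nat \<times> nat) + (nat \<times> nat) \<Rightarrow> 'f::zero)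
    \<Rightarrow> (nat \<times> nat \<Rightarrow> 'f) list" where
  "assign_list k n r yv = map (\<lambda>l (j, c). if (j, c) \<in> idx k n then yv (Inl (l, j, c)) else 0) [0..<r - 1]"

definition assign_point :: "nat \<Rightarrow> (nat \<Rightarrow> nat) \<Rightarrow> ((nat \<times> nat \<times> nat) + (nat \<times> nat) \<Rightarrow> 'f::zero)
    \<Rightarrow> nat \<times> nat \<Rightarrow> 'f" where
  "assign_point k n yv = (\<lambda>(j, c). if (j, c) \<in> idx k n then yv (Inr (j, c)) else 0)"

lemma assign_list_Qassign:
  assumes "set a \<subseteq> Gsum k n" "length a = r - 1"
  shows "assign_list k n r (Qassign a x) = a"
proof (rule nth_equalityI)
  fix l assume "l < length (assign_list k n r (Qassign a x))"
  then have "l < r - 1" "a ! l \<in> Gsum k n" using assms by (auto simp: assign_list_def)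
  then show "assign_list k n r (Qassign a x) ! l = a ! l"
    by (auto simp: assign_list_def Qassign_def fun_eq_iff Gsum_def)
qed (simp add: assms assign_list_def)

lemma assign_point_Qassign: "x \<in> Gsum k n \<Longrightarrow> assign_point k n (Qassign a x) = x"
  by (auto simp: assign_point_def Qassign_def fun_eq_iff Gsum_def)

definition Q_monomials :: "nat \<Rightarrow> (nat \<Rightarrow> nat) \<Rightarrow> nat \<Rightarrow> ((nat \<times> nat \<times> nat) + (nat \<times> nat)) multiset set" where
  "Q_monomials k n r = {M. (\<forall>v\<in>#M. Qvar_ok k n r v) \<and> (\<exists>i<k. \<forall>c. Inr (i, c) \<notin># M)}"

lemma poly_fun_on_ignoring_comp:
  fixes F :: "(nat \<times> nat \<Rightarrow> 'f::{finite,field}) list \<Rightarrow> (nat \<times> nat \<Rightarrow> 'f) \<Rightarrow> 'f"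
  assumes "j < k"
  shows "poly_fun_on UNIV (Q_monomials k n r)
    (\<lambda>yv. F (assign_list k n r yv) (setcomp n (assign_point k n yv) j 0))"
proof -
  define S where "S = (\<lambda>(l, j', c). Inl (l, j', c)) ` ({..<r - 1} \<times> idx k n)
    \<union> Inr ` {v \<in> idx k n. fst v \<noteq> j}"
  have "finite S" unfolding S_def using finite_idx by auto
  moreover have "F (assign_list k n r yv) (setcomp n (assign_point k n yv) j 0)
      = F (assign_list k n r yv') (setcomp n (assign_point k n yv') j 0)"
    if agree: "\<And>v. v \<in> S \<Longrightarrow> yv v = yv' v" for yv yv' :: "(nat \<times> nat \<times> nat) + (nat \<times> nat) \<Rightarrow> 'f"
  proof -
    have "assign_list k n r yv = assign_list k n r yv'"
      unfolding assign_list_def using agree by (auto simp: S_def fun_eq_iff)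
    moreover have "setcomp n (assign_point k n yv) j 0 = setcomp n (assign_point k n yv') j 0"
      using agree by (auto simp: S_def setcomp_def assign_point_def fun_eq_iff)
    ultimately show ?thesis by simp
  qed
  ultimately have "poly_fun_on UNIV {M. set_mset M \<subseteq> S}
      (\<lambda>yv. F (assign_list k n r yv) (setcomp n (assign_point k n yv) j 0))"
    by (rule poly_fun_on_finite_field)
  moreover have "{M. set_mset M \<subseteq> S} \<subseteq> Q_monomials k n r"
  proof
    fix M assume "M \<in> {M. set_mset M \<subseteq> S}"
    then have "\<forall>v\<in>#M. Qvar_ok k n r v" "\<forall>c. Inr (j, c) \<notin># M"
      by (auto simp: S_def Qvar_ok_def)
    then show "M \<in> Q_monomials k n r" using assms unfolding Q_monomials_def by blast
  qed
  ultimately show ?thesis by (rule poly_fun_on_mono)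
qed

lemma poly_remainder_of_incl_excl_eq_0:
  fixes F G :: "(nat \<times> nat \<Rightarrow> 'f::{finite,field}) list \<Rightarrow> (nat \<times> nat \<Rightarrow> 'f) \<Rightarrow> 'f"
  assumes "\<And>a x. set a \<subseteq> Gsum k n \<Longrightarrow> length a = r - 1 \<Longrightarrow> x \<in> Gsum k n \<Longrightarrow>
    incl_excl k n (\<lambda>y. F a y - G a y) x = 0"
  shows "\<exists>Q. is_poly Q \<and> (\<forall>M. Q M \<noteq> 0 \<longrightarrow> M \<in> Q_monomials k n r) \<and>
    (\<forall>a x. set a \<subseteq> Gsum k n \<and> length a = r - 1 \<and> x \<in> Gsum k n \<longrightarrow>
       F a x = G a x + poly_eval Q (Qassign a x))"
proof -
  define g where "g j yv = incl_excl j n (\<lambda>y. F (assign_list k n r yv) y - G (assign_list k n r yv) y)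
    (setcomp n (assign_point k n yv) j 0)" for j yv
  have "poly_fun_on UNIV (Q_monomials k n r) (\<lambda>yv. \<Sum>j<k. g j yv)"
    unfolding g_def by (intro poly_fun_on_sum poly_fun_on_ignoring_comp) auto
  then obtain Q where Q: "is_poly Q" "\<forall>M. Q M \<noteq> 0 \<longrightarrow> M \<in> Q_monomials k n r"
    "\<And>yv. (\<Sum>j<k. g j yv) = poly_eval Q yv"
    unfolding poly_fun_on_def by auto
  have "F a x - G a x = poly_eval Q (Qassign a x)"
    if "set a \<subseteq> Gsum k n" "length a = r - 1" "x \<in> Gsum k n" for a x
    using incl_excl_decomp[of "\<lambda>y. F a y - G a y" x k n] assms[OF that] Q(3)[of "Qassign a x"]
    by (simp add: g_def assign_list_Qassign assign_point_Qassign that)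
  then show ?thesis using Q(1,2) by (auto simp: diff_eq_eq ac_simps)
qed

lemma incl_excl_form_minus_Deltas:
  fixes \<psi> :: "(nat \<times> nat \<Rightarrow> 'f::field) list \<Rightarrow> (nat \<times> nat \<Rightarrow> 'f) \<Rightarrow> 'f"
  assumes "1 \<le> k" "multilinear_form k n (Suc m) \<psi>" "sym_slots k n m \<psi>" "swap_comp k n m \<psi>"
    and "\<And>t. 0 < t \<Longrightarrow> t \<le> Suc m \<Longrightarrow> of_nat t \<noteq> (0::'f)"
    and P: "\<And>y. y \<in> Gsum k n \<Longrightarrow> primitive k n m \<psi> y = P y"
    and a: "set a \<subseteq> Gsum k n" "length a = m" and x: "x \<in> Gsum k n"
  shows "incl_excl k n (\<lambda>y. \<psi> a y - Deltas a P y) x = 0"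
proof -
  have "incl_excl k n (Deltas a P) x = incl_excl k n (Deltas a (primitive k n m \<psi>)) x"
    using a x P by (intro incl_excl_cong Deltas_cong) auto
  also have "\<dots> = \<psi> a x" by (rule incl_excl_Deltas_primitive[OF assms(1-5) a x])
  finally show ?thesis
    using incl_excl_multilinear_form[OF assms(2) a(1) _ x] a(2) by (simp add: incl_excl_diff)
qed

lemma of_nat_neq_0_finite_field:
  assumes "prime p" "card (UNIV :: 'f::{finite,field} set) = p" "0 < t" "t < p"
  shows "of_nat t \<noteq> (0::'f)"
proof -
  have "CHAR('f) dvd p" using CHAR_dvd_CARD[where 'a='f] assms(2) by simp
  moreover have "CHAR('f) \<noteq> 1" using CHAR_not_1'[where 'a='f] by simp
  ultimately have "CHAR('f) = p" using assms(1) unfolding prime_nat_iff by blast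
  then show ?thesis using assms(3,4) by (simp add: of_nat_eq_0_iff_char_dvd) (meson nat_dvd_not_less)
qed

theorem proposition30:
  fixes p k r :: nat and n :: "nat \<Rightarrow> nat"
    and \<psi> :: "(nat \<times> nat \<Rightarrow> 'f::{finite, field}) list \<Rightarrow> (nat \<times> nat \<Rightarrow> 'f) \<Rightarrow> 'f"
  assumes "prime p" and "card (UNIV :: 'f set) = p"
    and "k \<ge> 1" and "r \<ge> 1" and "p \<ge> r + 1"
    and "multilinear_form k n r \<psi>"
    and sym: "\<And>a d i j. set a \<subseteq> Gsum k n \<Longrightarrow> length a = r - 1 \<Longrightarrow> d \<in> Gsum k n \<Longrightarrow>
               i < j \<Longrightarrow> j < r - 1 \<Longrightarrow> \<psi> (a[i := a ! j, j := a ! i]) d = \<psi> a d"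
    and swap: "\<And>a d i j u. set a \<subseteq> Gsum k n \<Longrightarrow> length a = r - 1 \<Longrightarrow> d \<in> Gsum k n \<Longrightarrow>
               i < r - 1 \<Longrightarrow> j < k \<Longrightarrow> u \<in> Gcomp n j \<Longrightarrow>
               \<psi> (a[i := iota n j u]) d = \<psi> (a[i := iota n j (comp d j)]) (setcomp n d j u)"
  shows "\<exists>P Q. in_Pkr k n r P \<and> is_poly Q
           \<and> (\<forall>m. Q m \<noteq> 0 \<longrightarrow> (\<forall>v\<in>#m. Qvar_ok k n r v) \<and> (\<exists>i<k. \<forall>c. Inr (i, c) \<notin># m))
           \<and> (\<forall>a x. set a \<subseteq> Gsum k n \<and> length a = r - 1 \<and> x \<in> Gsum k n \<longrightarrow>
                \<psi> a x = Deltas a (poly_eval P) x + poly_eval Q (Qassign a x))"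
proof -
  obtain m where r: "r = Suc m" using \<open>r \<ge> 1\<close> by (cases r) auto
  have ml: "multilinear_form k n (Suc m) \<psi>" using assms(6) r by simp
  have sy: "sym_slots k n m \<psi>" using sym unfolding sym_slots_def r by simp
  have sw: "swap_comp k n m \<psi>" using swap unfolding swap_comp_def r by simp
  have char: "\<And>t. 0 < t \<Longrightarrow> t \<le> Suc m \<Longrightarrow> of_nat t \<noteq> (0::'f)"
    using of_nat_neq_0_finite_field[OF assms(1,2)] assms(5) r by simp
  obtain P where P: "in_Pkr k n r P" "\<And>y. y \<in> Gsum k n \<Longrightarrow> primitive k n m \<psi> y = poly_eval P y"
    using primitive_in_Pkr[OF ml] r by blast
  have "\<exists>Q. is_poly Q \<and> (\<forall>M. Q M \<noteq> 0 \<longrightarrow> M \<in> Q_monomials k n r) \<and>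
      (\<forall>a x. set a \<subseteq> Gsum k n \<and> length a = r - 1 \<and> x \<in> Gsum k n \<longrightarrow>
         \<psi> a x = Deltas a (poly_eval P) x + poly_eval Q (Qassign a x))"
    using incl_excl_form_minus_Deltas[OF assms(3) ml sy sw char P(2)] r by (intro poly_remainder_of_incl_excl_eq_0) simp
  then show ?thesis using P(1) unfolding Q_monomials_def by blast
qed

end
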